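(* Let $h$ be a fixed positive integer. For positive integers $u,v,w$ let $g(u,v,w)=1$ if the system of congruences $n\equiv -h \pmod u$, $n\equiv 0\pmod v$, $n\equiv h\pmod w$ has an integer solution $n$, and $g(u,v,w)=0$ otherwise. Then, as $x\to\infty$, $$\sum_{u,v,w\le x}\frac{g(u,v,w)}{[u,v,w]}=\Delta(h)\prod_{p}\Big(1-\frac1p\Big)^2\Big(1+\frac2p\Big)(\log x)^3+O_h\big((\log x)^2\big),$$ where $\Delta(h)$ is the non-zero constant $$\Delta(h)=\prod_{p\mid 2h}\Big(1-\frac1p\Big)\Big(1+\frac2p\Big)^{-1}\left(\sum_{\nu_1,\nu_2,\nu_3\ge0}\frac{g(p^{\nu_1},p^{\nu_2},p^{\nu_3})}{[p^{\nu_1},p^{\nu_2},p^{\nu_3}]}\right).$$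
   Context: $[u,v,w]$ denotes the least common multiple of $u,v,w$; products over $p$ run over primes; the sum on the left is over positive integers $u,v,w\le x$. *)

theory Defs
  imports "HOL-Analysis.Analysis" "HOL-Number_Theory.Number_Theory" "HOL-Library.Landau_Symbols"
begin

definition gsys :: "nat \<Rightarrow> nat \<Rightarrow> nat \<Rightarrow> nat \<Rightarrow> real" where
  "gsys h u v w = (if \<exists>n::int. [n = - int h] (mod int u) \<and> [n = 0] (mod int v) \<and> [n = int h] (mod int w)
                   then 1 else 0)"

definition lcm3 :: "nat \<Rightarrow> nat \<Rightarrow> nat \<Rightarrow> nat" where
  "lcm3 u v w = lcm u (lcm v w)"

definition Ssum :: "nat \<Rightarrow> real \<Rightarrow> real" where
  "Ssum h x = (\<Sum>u\<in>{1..nat \<lfloor>x\<rfloor>}. \<Sum>v\<in>{1..nat \<lfloor>x\<rfloor>}. \<Sum>w\<in>{1..nat \<lfloor>x\<rfloor>}.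
                  gsys h u v w / real (lcm3 u v w))"

definition local_sum :: "nat \<Rightarrow> nat \<Rightarrow> real" where
  "local_sum h p = (\<Sum>\<^sub>\<infinity>(a,b,c)\<in>(UNIV :: (nat \<times> nat \<times> nat) set).
                     gsys h (p ^ a) (p ^ b) (p ^ c) / real (lcm3 (p ^ a) (p ^ b) (p ^ c)))"

definition Delta :: "nat \<Rightarrow> real" where
  "Delta h = (\<Prod>p\<in>{p. prime p \<and> p dvd 2 * h}.
                (1 - 1 / real p) * inverse (1 + 2 / real p) * local_sum h p)"

definition euler_prod :: real where
  "euler_prod = prodinf (\<lambda>n. if prime n then (1 - 1 / real n)^2 * (1 + 2 / real n) else 1)"

end

(* Write f(u, v, w) = g(u, v, w) / [u, v, w]. By the Chinese remainder theorem f is multiplicative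
   in the triple (u, v, w), and its local factor at (p^a, p^b, p^c) is at most p^(-max(a, b, c)).
   Moebius inversion on triples gives f(u, v, w) u v w = sum over d | (u, v, w) of kappa(d) d1 d2 d3,
   where kappa is multiplicative with local generating series (1 - z1/p)(1 - z2/p)(1 - z3/p) times
   that of f. For p not dividing 2h this local factor is 1 - 3/p^2 + 2/p^3, supported on exponents
   at most 1, so the sum of |kappa(d)| (d1 d2 d3)^(1/4) converges and the sum of kappa is the Euler
   product Delta(h) prod_p (1 - 1/p)^2 (1 + 2/p). Exchanging summations,
     S(x) = sum over d1, d2, d3 <= x of kappa(d) H(x/d1) H(x/d2) H(x/d3)
   with harmonic numbers H, and H(x/di) = log x + O(1 + log di) yields the main term with an error
   O((log x)^2), the weight (d1 d2 d3)^(1/4) absorbing the logarithms of the di. *)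

theory Submission
  imports Defs
begin

section \<open>Exponent triples\<close>

type_synonym triple = "nat \<times> nat \<times> nat"

definition tsum :: "triple \<Rightarrow> nat" where
  "tsum e = (case e of (a, b, c) \<Rightarrow> a + b + c)"

definition tmax :: "triple \<Rightarrow> nat" where
  "tmax e = (case e of (a, b, c) \<Rightarrow> max a (max b c))"

lemma tsum_eq: "tsum e = fst e + fst (snd e) + snd (snd e)"
  by (cases e) (simp add: tsum_def)

lemma tmax_eq: "tmax e = max (fst e) (max (fst (snd e)) (snd (snd e)))"
  by (cases e) (simp add: tmax_def)

lemma atMost_triple: "{..(a, b, c)} = {..a} \<times> {..b} \<times> {..c}" for a b c :: nat
  by (auto simp: less_eq_prod_def)

lemma finite_atMost_triple [simp]: "finite {..t :: triple}"
  by (cases t) (simp add: atMost_triple)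

lemma sum_atMost_triple:
  "(\<Sum>e\<in>{..(A, B, C)}. f e) = (\<Sum>a\<le>A. \<Sum>b\<le>B. \<Sum>c\<le>C. f (a, b, c))" for A B C :: nat
  by (simp add: atMost_triple sum.cartesian_product)

lemma tmax_add_le: "tmax (e + e') \<le> tmax e + tmax e'"
  by (cases e; cases e') (auto simp: tmax_def max_def)

lemma tsum_le_tmax: "tsum e \<le> 3 * tmax e"
  by (cases e) (simp add: tsum_def tmax_def)

lemma summable_on_power_tsum:
  fixes s :: real
  assumes "0 \<le> s" "s < 1"
  shows "(\<lambda>e. s ^ tsum e) summable_on UNIV"
proof -
  have geo: "((\<lambda>k. s ^ k) has_sum 1 / (1 - s)) UNIV"
    using assms by (intro sums_nonneg_imp_has_sum geometric_sums) auto
  have row: "((\<lambda>c. s ^ b * s ^ c) has_sum s ^ b * (1 / (1 - s))) UNIV" for b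
    by (rule has_sum_cmult_right[OF geo])
  have pair: "(\<lambda>(b, c). s ^ b * s ^ c) summable_on UNIV \<times> UNIV"
    by (rule summable_on_SigmaI[where g = "\<lambda>b. s ^ b * (1 / (1 - s))"])
       (use assms row summable_on_cmult_left[OF has_sum_imp_summable[OF geo]] in \<open>auto simp: divide_inverse\<close>)
  have "(\<lambda>(a, bc). s ^ a * (\<lambda>(b, c). s ^ b * s ^ c) bc) summable_on UNIV \<times> UNIV"
    by (rule summable_on_SigmaI[where g = "\<lambda>a. s ^ a * infsum (\<lambda>(b, c). s ^ b * s ^ c) UNIV"])
       (use assms pair summable_on_cmult_left[OF has_sum_imp_summable[OF geo]] in
          \<open>auto intro: has_sum_cmult_right\<close>)
  then show ?thesis
    by (simp add: tsum_def power_add case_prod_unfold mult.assoc)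
qed

section \<open>Local factors at a prime\<close>

lemma lcm_prime_powers: "lcm (p ^ a) (p ^ b) = (p::nat) ^ max a b"
  by (cases "a \<le> b") (auto simp: max_def le_imp_power_dvd)

lemma lcm3_prime_powers: "lcm3 (p ^ a) (p ^ b) (p ^ c) = (p::nat) ^ tmax (a, b, c)"
  by (simp add: lcm3_def lcm_prime_powers tmax_def)

definition local_term :: "nat \<Rightarrow> nat \<Rightarrow> triple \<Rightarrow> real" where
  "local_term h p = (\<lambda>(a, b, c). gsys h (p ^ a) (p ^ b) (p ^ c) / real (lcm3 (p ^ a) (p ^ b) (p ^ c)))"

lemma local_sum_eq_infsum: "local_sum h p = infsum (local_term h p) UNIV"
  by (simp add: local_sum_def local_term_def)

lemma local_term_eq: "local_term h p (a, b, c) = gsys h (p ^ a) (p ^ b) (p ^ c) / real p ^ tmax (a, b, c)"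
  by (simp add: local_term_def lcm3_prime_powers)

lemma local_term_zero: "local_term h p (0, 0, 0) = 1"
  by (simp add: local_term_def lcm3_def gsys_def)

lemma local_term_nonneg: "local_term h p e \<ge> 0"
  by (cases e) (simp add: local_term_def gsys_def)

lemma local_term_le:
  assumes "p > 0"
  shows "local_term h p e \<le> (1 / real p) ^ tmax e"
proof (cases e)
  case (fields a b c)
  have "gsys h (p ^ a) (p ^ b) (p ^ c) \<le> 1"
    by (simp add: gsys_def)
  then show ?thesis
    using assms by (simp add: fields local_term_eq divide_right_mono power_one_over)
qed

definition diff_shift :: "nat \<Rightarrow> triple \<Rightarrow> (triple \<Rightarrow> real) \<Rightarrow> triple \<Rightarrow> real" where
  "diff_shift p u \<phi> e = \<phi> e - (if u \<le> e then \<phi> (e - u) / real p else 0)"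

lemma has_sum_diff_shift:
  assumes "(\<phi> has_sum s) UNIV"
  shows "(diff_shift p u \<phi> has_sum (1 - 1 / real p) * s) UNIV"
proof -
  define \<psi> where "\<psi> e = (if u \<le> e then \<phi> (e - u) else 0)" for e
  have inj: "inj (\<lambda>e. e + u)"
    by (auto intro: injI)
  have "\<psi> \<circ> (\<lambda>e. e + u) = \<phi>"
    by (auto simp: \<psi>_def fun_eq_iff less_eq_prod_def)
  then have "(\<psi> has_sum s) (range (\<lambda>e. e + u))"
    using has_sum_reindex[OF inj, of \<psi> s] assms by simp
  moreover have "\<psi> e = 0" if "e \<notin> range (\<lambda>e. e + u)" for e
  proof -
    have "\<not> u \<le> e"
    proof
      assume "u \<le> e"
      then have "e = (e - u) + u"
        by (cases e; cases u) (auto simp: less_eq_prod_def)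
      with that show False by blast
    qed
    then show ?thesis by (simp add: \<psi>_def)
  qed
  ultimately have "(\<psi> has_sum s) UNIV"
    using has_sum_cong_neutral[of UNIV "range (\<lambda>e. e + u)" \<psi> \<psi> s] by auto
  then have "((\<lambda>e. \<phi> e + (- 1 / real p) * \<psi> e) has_sum s + (- 1 / real p) * s) UNIV"
    by (intro has_sum_add assms has_sum_cmult_right)
  moreover have "diff_shift p u \<phi> = (\<lambda>e. \<phi> e + (- 1 / real p) * \<psi> e)"
    by (auto simp: fun_eq_iff diff_shift_def \<psi>_def)
  ultimately show ?thesis
    by (simp add: algebra_simps)
qed

lemma abs_diff_shift_le:
  assumes p: "p \<ge> 1" and u: "tmax u \<le> 1" and bound: "\<And>e. \<bar>\<phi> e\<bar> \<le> K * (1 / real p) ^ tmax e"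
  shows "\<bar>diff_shift p u \<phi> e\<bar> \<le> 2 * K * (1 / real p) ^ tmax e"
proof -
  define q where "q = 1 / real p"
  have q: "0 < q" "q \<le> 1"
    using p by (auto simp: q_def)
  have "0 \<le> K * q ^ tmax e"
    unfolding q_def using bound[of e] by (meson abs_ge_zero order_trans)
  then have K: "K \<ge> 0"
    using zero_less_power[OF q(1), of "tmax e"] by (auto simp: zero_le_mult_iff)
  have shifted: "\<bar>\<phi> (e - u) / real p\<bar> \<le> K * q ^ tmax e" if "u \<le> e"
  proof -
    have tmax_le: "tmax e \<le> Suc (tmax (e - u))"
      using tmax_add_le[of "e - u" u] u that
      by (cases e; cases u) (auto simp: less_eq_prod_def)
    have "q ^ tmax (e - u) * q \<le> q ^ tmax e"
      using power_decreasing[OF tmax_le, of q] q by (simp add: mult.commute)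
    moreover have "\<bar>\<phi> (e - u) / real p\<bar> \<le> K * q ^ tmax (e - u) * q"
      using bound[of "e - u"] p by (simp add: q_def abs_div divide_right_mono)
    ultimately show ?thesis
      using K by (smt (verit) mult.assoc mult_left_mono)
  qed
  have "\<bar>diff_shift p u \<phi> e\<bar> \<le> \<bar>\<phi> e\<bar> + \<bar>if u \<le> e then \<phi> (e - u) / real p else 0\<bar>"
    unfolding diff_shift_def by (rule abs_triangle_ineq4)
  also have "\<dots> \<le> K * q ^ tmax e + K * q ^ tmax e"
    using bound[of e] shifted K q by (intro add_mono) (auto simp: q_def)
  finally show ?thesis
    by (simp add: q_def)
qed

(* Multiplication of the generating series by (1 - z1/p)(1 - z2/p)(1 - z3/p). *)
definition diff_shift3 :: "nat \<Rightarrow> (triple \<Rightarrow> real) \<Rightarrow> triple \<Rightarrow> real" where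
  "diff_shift3 p \<phi> = diff_shift p (1, 0, 0) (diff_shift p (0, 1, 0) (diff_shift p (0, 0, 1) \<phi>))"

(* Stated with Suc 0: the simplifier rewrites 1 :: nat to Suc 0 before these rules could match. *)
lemma diff_shift_unit:
  "diff_shift p (Suc 0, 0, 0) \<phi> (a, b, c) = \<phi> (a, b, c) - (if 0 < a then \<phi> (a - 1, b, c) / real p else 0)"
  "diff_shift p (0, Suc 0, 0) \<phi> (a, b, c) = \<phi> (a, b, c) - (if 0 < b then \<phi> (a, b - 1, c) / real p else 0)"
  "diff_shift p (0, 0, Suc 0) \<phi> (a, b, c) = \<phi> (a, b, c) - (if 0 < c then \<phi> (a, b, c - 1) / real p else 0)"
  by (simp_all add: diff_shift_def less_eq_prod_def Suc_le_eq)

lemma diff_shift3_zero: "diff_shift3 p \<phi> (0, 0, 0) = \<phi> (0, 0, 0)"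
  by (simp add: diff_shift3_def diff_shift_unit)

lemma sum_power_diff_telescope:
  assumes "p > 0"
  shows "(\<Sum>a\<le>A. real p ^ a * (\<psi> a - (if 0 < a then \<psi> (a - 1) / real p else 0))) = real p ^ A * \<psi> A"
proof (induction A)
  case (Suc A)
  then show ?case
    using assms by (simp add: field_simps)
qed simp

lemma diff_shift3_box_sum:
  assumes p: "p > 0"
  shows "(\<Sum>e\<in>{..E}. real p ^ tsum e * diff_shift3 p \<phi> e) = real p ^ tsum E * \<phi> E"
proof -
  obtain A B C where E: "E = (A, B, C)"
    by (cases E) auto
  define \<phi>2 where "\<phi>2 = diff_shift p (0, 0, 1) \<phi>"
  define \<phi>1 where "\<phi>1 = diff_shift p (0, 1, 0) \<phi>2"
  define \<Psi>1 where "\<Psi>1 a = (\<Sum>b\<le>B. \<Sum>c\<le>C. real p ^ b * real p ^ c * \<phi>1 (a, b, c))" for a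
  define \<Psi>2 where "\<Psi>2 b = (\<Sum>c\<le>C. real p ^ c * \<phi>2 (A, b, c))" for b
  have step1: "(\<Sum>b\<le>B. \<Sum>c\<le>C. real p ^ b * real p ^ c * diff_shift p (1, 0, 0) \<phi>1 (a, b, c))
      = \<Psi>1 a - (if 0 < a then \<Psi>1 (a - 1) / real p else 0)" for a
    by (cases "0 < a")
       (simp_all add: diff_shift_unit \<Psi>1_def algebra_simps sum_subtractf sum_divide_distrib sum_distrib_left)
  have step2: "(\<Sum>c\<le>C. real p ^ c * diff_shift p (0, 1, 0) \<phi>2 (A, b, c))
      = \<Psi>2 b - (if 0 < b then \<Psi>2 (b - 1) / real p else 0)" for b
    by (cases "0 < b")
       (simp_all add: diff_shift_unit \<Psi>2_def algebra_simps sum_subtractf sum_divide_distrib sum_distrib_left)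
  have "(\<Sum>e\<in>{..E}. real p ^ tsum e * diff_shift3 p \<phi> e)
      = (\<Sum>a\<le>A. real p ^ a * (\<Sum>b\<le>B. \<Sum>c\<le>C. real p ^ b * real p ^ c * diff_shift p (1, 0, 0) \<phi>1 (a, b, c)))"
    by (simp add: E sum_atMost_triple tsum_def diff_shift3_def \<phi>1_def \<phi>2_def
        power_add sum_distrib_left mult.assoc)
  also have "\<dots> = real p ^ A * \<Psi>1 A"
    by (simp only: step1 sum_power_diff_telescope[OF p])
  also have "\<Psi>1 A = (\<Sum>b\<le>B. real p ^ b * (\<Sum>c\<le>C. real p ^ c * diff_shift p (0, 1, 0) \<phi>2 (A, b, c)))"
    by (simp add: \<Psi>1_def \<phi>1_def sum_distrib_left mult.assoc)
  also have "\<dots> = real p ^ B * \<Psi>2 B"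
    by (simp only: step2 sum_power_diff_telescope[OF p])
  also have "\<Psi>2 B = real p ^ C * \<phi> (A, B, C)"
    using sum_power_diff_telescope[OF p, of "\<lambda>c. \<phi> (A, B, c)" C]
    by (simp add: \<Psi>2_def \<phi>2_def diff_shift_unit)
  finally show ?thesis
    by (simp add: E tsum_def power_add mult.assoc)
qed

lemma has_sum_diff_shift3:
  assumes "(\<phi> has_sum s) UNIV"
  shows "(diff_shift3 p \<phi> has_sum (1 - 1 / real p) ^ 3 * s) UNIV"
proof -
  have "(diff_shift p (0, 0, 1) \<phi> has_sum (1 - 1 / real p) * s) UNIV"
    by (rule has_sum_diff_shift[OF assms])
  then have "(diff_shift p (0, 1, 0) (diff_shift p (0, 0, 1) \<phi>) has_sum (1 - 1 / real p) * ((1 - 1 / real p) * s)) UNIV"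
    by (rule has_sum_diff_shift)
  then have "(diff_shift3 p \<phi> has_sum (1 - 1 / real p) * ((1 - 1 / real p) * ((1 - 1 / real p) * s))) UNIV"
    unfolding diff_shift3_def by (rule has_sum_diff_shift)
  then show ?thesis
    by (simp add: power3_eq_cube mult.assoc)
qed

lemma abs_diff_shift3_le:
  assumes p: "p \<ge> 1" and bound: "\<And>e. \<bar>\<phi> e\<bar> \<le> K * (1 / real p) ^ tmax e"
  shows "\<bar>diff_shift3 p \<phi> e\<bar> \<le> 8 * K * (1 / real p) ^ tmax e"
proof -
  have unit: "tmax (1, 0, 0) \<le> 1" "tmax (0, 1, 0) \<le> 1" "tmax (0, 0, 1) \<le> 1"
    by (simp_all add: tmax_def)
  note step = abs_diff_shift_le[OF p]
  show ?thesis
    using step[OF unit(1) step[OF unit(2) step[OF unit(3) bound]]]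
    by (simp add: diff_shift3_def)
qed

lemma power_tmax_weight_le:
  assumes p: "p \<ge> 2"
  shows "(1 / real p) ^ tmax e * (real p powr (1/4)) ^ tsum e \<le> (real p powr (-1/12)) ^ tsum e"
proof -
  have "(1 / real p) ^ tmax e = real p powr (- real (tmax e))"
    using p by (simp add: powr_minus powr_realpow power_one_over divide_inverse power_inverse)
  moreover have "(real p powr (1/4)) ^ tsum e = real p powr (real (tsum e) * (1/4))"
    using p by (simp add: powr_power)
  moreover have "(real p powr (-1/12)) ^ tsum e = real p powr (real (tsum e) * (-1/12))"
    using p by (simp add: powr_power)
  moreover have "real p powr (- real (tmax e)) * real p powr (real (tsum e) * (1/4))
      \<le> real p powr (real (tsum e) * (-1/12))"
    unfolding powr_add[symmetric] using tsum_le_tmax[of e] p by (intro powr_mono) auto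
  ultimately show ?thesis
    by (simp only:)
qed

lemma summable_on_weighted_of_bound:
  assumes p: "p \<ge> 2" and bound: "\<And>e. \<bar>\<phi> e\<bar> \<le> K * (1 / real p) ^ tmax e"
  shows "(\<lambda>e. \<bar>\<phi> e\<bar> * (real p powr (1/4)) ^ tsum e) summable_on UNIV"
proof (rule summable_on_comparison_test)
  have K: "K \<ge> 0"
    using bound[of "(0, 0, 0)"] by (simp add: tmax_def)
  have "real p powr (-1/12) < 1"
    using p by (intro powr_less_one) auto
  then show "(\<lambda>e. K * (real p powr (-1/12)) ^ tsum e) summable_on UNIV"
    by (intro summable_on_cmult_right summable_on_power_tsum) simp_all
  fix e
  have "\<bar>\<phi> e\<bar> * (real p powr (1/4)) ^ tsum e \<le> K * (1 / real p) ^ tmax e * (real p powr (1/4)) ^ tsum e"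
    by (rule mult_right_mono[OF bound]) simp
  also have "\<dots> \<le> K * (real p powr (-1/12)) ^ tsum e"
    unfolding mult.assoc by (rule mult_left_mono[OF power_tmax_weight_le[OF p] K])
  finally show "\<bar>\<phi> e\<bar> * (real p powr (1/4)) ^ tsum e \<le> K * (real p powr (-1/12)) ^ tsum e" .
qed simp

lemma summable_on_of_bound:
  assumes p: "p \<ge> 2" and bound: "\<And>e. \<bar>\<phi> e\<bar> \<le> K * (1 / real p) ^ tmax e"
  shows "\<phi> summable_on UNIV"
proof -
  have "(\<lambda>e. \<bar>\<phi> e\<bar>) summable_on UNIV"
  proof (rule summable_on_comparison_test[OF summable_on_weighted_of_bound[OF assms]])
    fix e
    have "1 \<le> (real p powr (1/4)) ^ tsum e"
      using p by (intro one_le_power ge_one_powr_ge_zero) auto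
    from mult_left_mono[OF this abs_ge_zero[of "\<phi> e"]]
    show "\<bar>\<phi> e\<bar> \<le> \<bar>\<phi> e\<bar> * (real p powr (1/4)) ^ tsum e"
      by simp
  qed simp
  then show ?thesis
    using summable_on_iff_abs_summable_on_real[of \<phi> UNIV] by simp
qed

definition local_kernel :: "nat \<Rightarrow> nat \<Rightarrow> triple \<Rightarrow> real" where
  "local_kernel h p = diff_shift3 p (local_term h p)"

lemma local_kernel_zero: "local_kernel h p (0, 0, 0) = 1"
  by (simp add: local_kernel_def diff_shift3_zero local_term_zero)

lemma local_kernel_box_sum:
  "p > 0 \<Longrightarrow> (\<Sum>e\<in>{..E}. real p ^ tsum e * local_kernel h p e) = real p ^ tsum E * local_term h p E"
  unfolding local_kernel_def by (rule diff_shift3_box_sum)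

lemma abs_local_term_le: "p > 0 \<Longrightarrow> \<bar>local_term h p e\<bar> \<le> 1 * (1 / real p) ^ tmax e"
  using local_term_le local_term_nonneg by simp

lemma abs_local_kernel_le: "p > 0 \<Longrightarrow> \<bar>local_kernel h p e\<bar> \<le> 8 * (1 / real p) ^ tmax e"
  using abs_diff_shift3_le[of p "local_term h p" 1 e] abs_local_term_le[of p h]
  by (simp add: local_kernel_def)

lemma has_sum_local_kernel:
  assumes "prime p"
  shows "(local_kernel h p has_sum (1 - 1 / real p) ^ 3 * local_sum h p) UNIV"
proof -
  have "local_term h p summable_on UNIV"
    using assms by (intro summable_on_of_bound[OF prime_ge_2_nat abs_local_term_le]) (auto simp: prime_gt_0_nat)
  then show ?thesis
    unfolding local_kernel_def local_sum_eq_infsum by (intro has_sum_diff_shift3 has_sum_infsum)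
qed

definition local_weight :: "nat \<Rightarrow> nat \<Rightarrow> triple \<Rightarrow> real" where
  "local_weight h p e = \<bar>local_kernel h p e\<bar> * (real p powr (1/4)) ^ tsum e"

lemma local_weight_nonneg: "local_weight h p e \<ge> 0"
  by (simp add: local_weight_def)

lemma local_weight_summable: "prime p \<Longrightarrow> local_weight h p summable_on UNIV"
  unfolding local_weight_def
  by (intro summable_on_weighted_of_bound[OF prime_ge_2_nat abs_local_kernel_le]) (auto simp: prime_gt_0_nat)

lemma local_kernel_summable: "prime p \<Longrightarrow> local_kernel h p summable_on UNIV"
  by (intro summable_on_of_bound[OF prime_ge_2_nat abs_local_kernel_le]) (auto simp: prime_gt_0_nat)

lemma gsys_prime_powers_coprime:
  assumes p: "prime p" and coprime: "\<not> p dvd 2 * h"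
  shows "gsys h (p ^ a) (p ^ b) (p ^ c) = (if (a = 0 \<and> b = 0) \<or> (a = 0 \<and> c = 0) \<or> (b = 0 \<and> c = 0) then 1 else 0)"
proof (cases "(a = 0 \<and> b = 0) \<or> (a = 0 \<and> c = 0) \<or> (b = 0 \<and> c = 0)")
  case True
  then consider "a = 0" "b = 0" | "a = 0" "c = 0" | "b = 0" "c = 0"
    by blast
  then have "\<exists>n::int. [n = - int h] (mod int (p ^ a)) \<and> [n = 0] (mod int (p ^ b)) \<and> [n = int h] (mod int (p ^ c))"
    by cases (auto intro: exI[of _ "int h"] exI[of _ 0] exI[of _ "- int h"])
  then show ?thesis
    using True by (simp add: gsys_def)
next
  case False
  have "\<not> (\<exists>n::int. [n = - int h] (mod int (p ^ a)) \<and> [n = 0] (mod int (p ^ b)) \<and> [n = int h] (mod int (p ^ c)))"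
  proof
    assume "\<exists>n::int. [n = - int h] (mod int (p ^ a)) \<and> [n = 0] (mod int (p ^ b)) \<and> [n = int h] (mod int (p ^ c))"
    then obtain n :: int where n: "[n = - int h] (mod int (p ^ a))" "[n = 0] (mod int (p ^ b))" "[n = int h] (mod int (p ^ c))"
      by blast
    have p_dvd: "int p dvd int (p ^ k)" if "k > 0" for k
      using that by (simp add: dvd_power)
    have dvd: "a > 0 \<Longrightarrow> int p dvd n + int h" "b > 0 \<Longrightarrow> int p dvd n" "c > 0 \<Longrightarrow> int p dvd n - int h"
      using cong_dvd_modulus[OF n(1) p_dvd] cong_dvd_modulus[OF n(2) p_dvd] cong_dvd_modulus[OF n(3) p_dvd]
      by (simp_all add: cong_iff_dvd_diff)
    have not_dvd: "\<not> int p dvd 2 * int h" "\<not> int p dvd int h"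
      using coprime int_dvd_int_iff[of p "2 * h"] dvd_mult by (auto simp del: int_dvd_int_iff)
    from False consider "a > 0" "b > 0" | "a > 0" "c > 0" | "b > 0" "c > 0"
      by auto
    then show False
    proof cases
      case 1
      then show False using dvd_diff[OF dvd(1,2)] not_dvd by simp
    next
      case 2
      then have "int p dvd (n + int h) - (n - int h)"
        using dvd_diff[OF dvd(1,3)] by simp
      then show False using not_dvd by (simp add: algebra_simps)
    next
      case 3
      then show False using dvd_diff[OF dvd(2,3)] not_dvd by simp
    qed
  qed
  then show ?thesis
    using False by (simp add: gsys_def)
qed

lemma local_kernel_coprime:
  assumes p: "prime p" and coprime: "\<not> p dvd 2 * h"
  shows "local_kernel h p (a, b, c) =
    (if (a, b, c) = (0, 0, 0) then 1
     else if (a, b, c) \<in> {(1, 1, 0), (1, 0, 1), (0, 1, 1)} then - (inverse (real p) ^ 2)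
     else if (a, b, c) = (1, 1, 1) then 2 * inverse (real p) ^ 3 else 0)"
proof -
  have local_term: "local_term h p (a, b, c) =
      (if (a = 0 \<and> b = 0) \<or> (a = 0 \<and> c = 0) \<or> (b = 0 \<and> c = 0) then inverse (real p) ^ (a + b + c) else 0)"
    for a b c
    by (auto simp: local_term_eq gsys_prime_powers_coprime[OF p coprime] tmax_def power_inverse divide_inverse)
  have "a = 0 \<or> a = 1 \<or> (\<exists>a'. a = Suc (Suc a'))" "b = 0 \<or> b = 1 \<or> (\<exists>b'. b = Suc (Suc b'))"
    "c = 0 \<or> c = 1 \<or> (\<exists>c'. c = Suc (Suc c'))"
    by presburger+
  then show ?thesis
    by (elim disjE exE)
       (simp_all add: local_kernel_def diff_shift3_def diff_shift_unit local_term divide_inverse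
         power3_eq_cube power2_eq_square)
qed

definition coprime_support :: "triple set" where
  "coprime_support = {(0, 0, 0), (1, 1, 0), (1, 0, 1), (0, 1, 1), (1, 1, 1)}"

lemma local_kernel_outside_support:
  "prime p \<Longrightarrow> \<not> p dvd 2 * h \<Longrightarrow> e \<notin> coprime_support \<Longrightarrow> local_kernel h p e = 0"
  by (cases e) (auto simp: local_kernel_coprime coprime_support_def)

lemma has_sum_local_kernel_coprime:
  assumes p: "prime p" and coprime: "\<not> p dvd 2 * h"
  shows "(local_kernel h p has_sum (1 - 1 / real p) ^ 2 * (1 + 2 / real p)) UNIV"
proof -
  have "(local_kernel h p has_sum (\<Sum>e\<in>coprime_support. local_kernel h p e)) coprime_support"
    by (rule has_sum_finiteI) (auto simp: coprime_support_def)
  moreover have "(local_kernel h p has_sum X) coprime_support \<longleftrightarrow> (local_kernel h p has_sum X) UNIV" for X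
    by (rule has_sum_cong_neutral) (use local_kernel_outside_support[OF p coprime] in auto)
  ultimately have "(local_kernel h p has_sum (\<Sum>e\<in>coprime_support. local_kernel h p e)) UNIV"
    by blast
  moreover have "(\<Sum>e\<in>coprime_support. local_kernel h p e) = 1 - 3 * inverse (real p) ^ 2 + 2 * inverse (real p) ^ 3"
    by (simp add: coprime_support_def local_kernel_coprime[OF p coprime])
  moreover have "\<dots> = (1 - 1 / real p) ^ 2 * (1 + 2 / real p)"
    using prime_gt_0_nat[OF p] by (simp add: field_simps power2_eq_square power3_eq_cube)
  ultimately show ?thesis
    by simp
qed

lemma local_weight_infsum_coprime:
  assumes p: "prime p" and coprime: "\<not> p dvd 2 * h"
  shows "infsum (local_weight h p) UNIV \<le> 1 + 5 * real p powr (-3/2)"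
proof -
  define P where "P = real p"
  have P: "P \<ge> 1"
    using prime_ge_1_nat[OF p] by (simp add: P_def)
  have P0: "P > 0"
    using P by simp
  have inverse2: "inverse P ^ 2 = P powr (-2)" and inverse3: "inverse P ^ 3 = P powr (-3)"
    using powr_realpow[OF P0, of 2] powr_realpow[OF P0, of 3] by (simp_all add: powr_minus power_inverse)
  have root2: "(P powr (1/4)) ^ 2 = P powr (1/2)" and root3: "(P powr (1/4)) ^ 3 = P powr (3/4)"
    using powr_power[of P "1/4" 2] powr_power[of P "1/4" 3] P0 by simp_all
  have weight2: "inverse P ^ 2 * (P powr (1/4)) ^ 2 = P powr (-3/2)"
    unfolding inverse2 root2 powr_add[symmetric] by simp
  have weight3: "inverse P ^ 3 * (P powr (1/4)) ^ 3 \<le> P powr (-3/2)"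
  proof -
    have "inverse P ^ 3 * (P powr (1/4)) ^ 3 = P powr (-9/4)"
      unfolding inverse3 root3 powr_add[symmetric] by simp
    also have "\<dots> \<le> P powr (-3/2)"
      using P by (intro powr_mono) auto
    finally show ?thesis .
  qed
  have "infsum (local_weight h p) UNIV = (\<Sum>e\<in>coprime_support. local_weight h p e)"
    by (subst infsum_cong_neutral[of coprime_support UNIV _ "local_weight h p"])
       (auto simp: local_weight_def local_kernel_outside_support[OF p coprime] coprime_support_def)
  also have "\<dots> = 1 + 3 * (inverse P ^ 2 * (P powr (1/4)) ^ 2) + 2 * (inverse P ^ 3 * (P powr (1/4)) ^ 3)"
    by (simp add: P_def coprime_support_def local_weight_def local_kernel_coprime[OF p coprime]
        tsum_def power2_eq_square power3_eq_cube mult_ac)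
  also have "\<dots> \<le> 1 + 5 * P powr (-3/2)"
    using weight2 weight3 by simp
  finally show ?thesis
    by (simp add: P_def)
qed

section \<open>Multiplicativity on triples\<close>

definition tprod :: "triple \<Rightarrow> nat" where
  "tprod d = fst d * fst (snd d) * snd (snd d)"

definition pos_triples :: "triple set" where
  "pos_triples = {d. fst d > 0 \<and> fst (snd d) > 0 \<and> snd (snd d) > 0}"

definition tmultiplicity :: "nat \<Rightarrow> triple \<Rightarrow> triple" where
  "tmultiplicity p d = (multiplicity p (fst d), multiplicity p (fst (snd d)), multiplicity p (snd (snd d)))"

definition tprime_factors :: "triple \<Rightarrow> nat set" where
  "tprime_factors d = prime_factors (tprod d)"

definition finite_prime_set :: "nat set \<Rightarrow> bool" where
  "finite_prime_set S \<longleftrightarrow> finite S \<and> (\<forall>p\<in>S. prime p)"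

definition of_exponents :: "nat set \<Rightarrow> (nat \<Rightarrow> triple) \<Rightarrow> triple" where
  "of_exponents S e =
     ((\<Prod>p\<in>S. p ^ fst (e p)), (\<Prod>p\<in>S. p ^ fst (snd (e p))), (\<Prod>p\<in>S. p ^ snd (snd (e p))))"

definition smooth_triples :: "nat set \<Rightarrow> triple set" where
  "smooth_triples S = {d \<in> pos_triples. tprime_factors d \<subseteq> S}"

definition tdivisors :: "triple \<Rightarrow> triple set" where
  "tdivisors u = {d. fst d dvd fst u \<and> fst (snd d) dvd fst (snd u) \<and> snd (snd d) dvd snd (snd u)}"

lemma finite_prime_setD: "finite_prime_set S \<Longrightarrow> finite S" "finite_prime_set S \<Longrightarrow> p \<in> S \<Longrightarrow> prime p"
  by (simp_all add: finite_prime_set_def)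

lemma prod_prime_powers_pos: "finite_prime_set S \<Longrightarrow> (\<Prod>p\<in>S. p ^ k p) > (0::nat)"
  unfolding finite_prime_set_def by (auto intro!: prod_pos simp: prime_gt_0_nat)

lemma multiplicity_prod_prime_powers':
  "finite_prime_set S \<Longrightarrow> prime q \<Longrightarrow> multiplicity q (\<Prod>p\<in>S. p ^ k p) = (if q \<in> S then k q else 0)"
  unfolding finite_prime_set_def by (rule multiplicity_prod_prime_powers) auto

lemma prod_prime_powers_dvd:
  assumes S: "finite_prime_set S" and n: "n > 0" and le: "\<And>p. p \<in> S \<Longrightarrow> k p \<le> multiplicity p n"
  shows "(\<Prod>p\<in>S. p ^ k p) dvd (n::nat)"
proof (rule multiplicity_le_imp_dvd)
  show "(\<Prod>p\<in>S. p ^ k p) \<noteq> 0"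
    using prod_prime_powers_pos[OF S] by (metis not_less0)
  show "multiplicity q (\<Prod>p\<in>S. p ^ k p) \<le> multiplicity q n" if "prime q" for q
    using multiplicity_prod_prime_powers'[OF S that, of k] le[of q] by simp
qed

lemma prod_multiplicity_eq:
  assumes S: "finite_prime_set S" and n: "n > 0" and factors: "\<And>q. prime q \<Longrightarrow> q dvd n \<Longrightarrow> q \<in> S"
  shows "(\<Prod>p\<in>S. p ^ multiplicity p n) = (n::nat)"
proof -
  have "normalize (\<Prod>p\<in>S. p ^ multiplicity p n) = normalize n"
  proof (rule multiplicity_eq_imp_eq)
    show "(\<Prod>p\<in>S. p ^ multiplicity p n) \<noteq> 0"
      using prod_prime_powers_pos[OF S] by (metis not_less0)
    show "multiplicity q (\<Prod>p\<in>S. p ^ multiplicity p n) = multiplicity q n" if "prime q" for q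
      using multiplicity_prod_prime_powers'[OF S that] factors[OF that] not_dvd_imp_multiplicity_0 by auto
  qed (use n in simp)
  then show ?thesis
    by simp
qed

lemma tmultiplicity_of_exponents:
  "finite_prime_set S \<Longrightarrow> prime q \<Longrightarrow> tmultiplicity q (of_exponents S e) = (if q \<in> S then e q else (0, 0, 0))"
  by (simp add: tmultiplicity_def of_exponents_def multiplicity_prod_prime_powers')

lemma of_exponents_pos: "finite_prime_set S \<Longrightarrow> of_exponents S e \<in> pos_triples"
  by (simp add: of_exponents_def pos_triples_def prod_prime_powers_pos)

lemma tprod_of_exponents: "tprod (of_exponents S e) = (\<Prod>p\<in>S. p ^ tsum (e p))"
  by (simp add: tprod_def of_exponents_def tsum_eq power_add prod.distrib)

lemma tprod_pos: "d \<in> pos_triples \<Longrightarrow> tprod d > 0"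
  by (auto simp: pos_triples_def tprod_def)

lemma coords_le_tprod:
  assumes "d \<in> pos_triples"
  shows "fst d \<le> tprod d" "fst (snd d) \<le> tprod d" "snd (snd d) \<le> tprod d"
  using assms by (auto simp: pos_triples_def tprod_def)

lemma tprime_factors_iff:
  assumes "d \<in> pos_triples"
  shows "q \<in> tprime_factors d \<longleftrightarrow> prime q \<and> tmultiplicity q d \<noteq> (0, 0, 0)"
proof -
  have "multiplicity q (tprod d) =
      multiplicity q (fst d) + multiplicity q (fst (snd d)) + multiplicity q (snd (snd d))" if "prime q"
    using assms that by (auto simp: pos_triples_def tprod_def prime_elem_multiplicity_mult_distrib)
  then show ?thesis
    by (auto simp: tprime_factors_def prime_factors_multiplicity tmultiplicity_def)
qed

lemma finite_prime_set_tprime_factors: "finite_prime_set (tprime_factors d)"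
  by (auto simp: finite_prime_set_def tprime_factors_def in_prime_factors_iff)

lemma tprime_factors_of_exponents:
  assumes S: "finite_prime_set S"
  shows "tprime_factors (of_exponents S e) \<subseteq> S"
proof
  fix q assume "q \<in> tprime_factors (of_exponents S e)"
  then have "prime q" "tmultiplicity q (of_exponents S e) \<noteq> (0, 0, 0)"
    using tprime_factors_iff[OF of_exponents_pos[OF S]] by blast+
  then show "q \<in> S"
    using tmultiplicity_of_exponents[OF S] by (metis (full_types))
qed

lemma of_exponents_tmultiplicity:
  assumes S: "finite_prime_set S" and d: "d \<in> pos_triples" and factors: "tprime_factors d \<subseteq> S"
  shows "of_exponents S (\<lambda>p. tmultiplicity p d) = d"
proof -
  have "q \<in> S" if "prime q" "q dvd tprod d" for q
    using that factors tprod_pos[OF d] by (auto simp: tprime_factors_def in_prime_factors_iff)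
  then have "(\<Prod>p\<in>S. p ^ multiplicity p n) = n" if "n > 0" "n dvd tprod d" for n
    using that by (intro prod_multiplicity_eq[OF S]) (auto dest: dvd_trans)
  then show ?thesis
    using d by (cases d) (auto simp: of_exponents_def tmultiplicity_def pos_triples_def tprod_def)
qed

lemma of_exponents_cong: "(\<And>p. p \<in> S \<Longrightarrow> e p = e' p) \<Longrightarrow> of_exponents S e = of_exponents S e'"
  unfolding of_exponents_def by (metis (no_types, lifting) prod.cong)

lemma of_exponents_restrict_tmultiplicity:
  "finite_prime_set S \<Longrightarrow> d \<in> pos_triples \<Longrightarrow> tprime_factors d \<subseteq> S \<Longrightarrow>
    of_exponents S (restrict (\<lambda>p. tmultiplicity p d) S) = d"
  using of_exponents_tmultiplicity of_exponents_cong[of S "restrict (\<lambda>p. tmultiplicity p d) S"] by simp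

lemma inj_on_of_exponents: "finite_prime_set S \<Longrightarrow> inj_on (of_exponents S) (PiE S B)"
proof (rule inj_onI)
  fix e e' assume S: "finite_prime_set S" and e: "e \<in> PiE S B" and e': "e' \<in> PiE S B"
    and eq: "of_exponents S e = of_exponents S e'"
  show "e = e'"
  proof
    fix p
    show "e p = e' p"
    proof (cases "p \<in> S")
      case True
      then have "e p = tmultiplicity p (of_exponents S e)"
        using tmultiplicity_of_exponents[OF S finite_prime_setD(2)[OF S True]] by simp
      also have "\<dots> = e' p"
        using tmultiplicity_of_exponents[OF S finite_prime_setD(2)[OF S True]] True by (simp add: eq)
      finally show ?thesis .
    next
      case False
      then show ?thesis
        using PiE_arb[OF e False] PiE_arb[OF e' False] by simp
    qed
  qed
qed

lemma bij_betw_of_exponents_smooth: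
  assumes S: "finite_prime_set S"
  shows "bij_betw (of_exponents S) (PiE S (\<lambda>_. UNIV)) (smooth_triples S)"
proof (rule bij_betw_imageI)
  show "inj_on (of_exponents S) (PiE S (\<lambda>_. UNIV))"
    by (rule inj_on_of_exponents[OF S])
  have "d \<in> of_exponents S ` PiE S (\<lambda>_. UNIV)" if "d \<in> smooth_triples S" for d
    using that of_exponents_restrict_tmultiplicity[OF S, of d]
    by (auto simp: smooth_triples_def intro!: image_eqI[where x = "restrict (\<lambda>p. tmultiplicity p d) S"])
  moreover have "of_exponents S ` PiE S (\<lambda>_. UNIV) \<subseteq> smooth_triples S"
    using of_exponents_pos[OF S] tprime_factors_of_exponents[OF S] unfolding smooth_triples_def by blast
  ultimately show "of_exponents S ` PiE S (\<lambda>_. UNIV) = smooth_triples S"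
    by blast
qed

lemma bij_betw_of_exponents_tdivisors:
  assumes S: "finite_prime_set S" and u: "u \<in> pos_triples" and factors: "tprime_factors u \<subseteq> S"
  shows "bij_betw (of_exponents S) (PiE S (\<lambda>p. {..tmultiplicity p u})) (tdivisors u)"
proof (rule bij_betw_imageI)
  show "inj_on (of_exponents S) (PiE S (\<lambda>p. {..tmultiplicity p u}))"
    by (rule inj_on_of_exponents[OF S])
  have u_pos: "fst u > 0" "fst (snd u) > 0" "snd (snd u) > 0"
    using u by (auto simp: pos_triples_def)
  show "of_exponents S ` PiE S (\<lambda>p. {..tmultiplicity p u}) = tdivisors u"
  proof (intro equalityI subsetI)
    fix d assume "d \<in> of_exponents S ` PiE S (\<lambda>p. {..tmultiplicity p u})"
    then obtain e where e: "e \<in> PiE S (\<lambda>p. {..tmultiplicity p u})" and d: "d = of_exponents S e"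
      by blast
    have "e p \<le> tmultiplicity p u" if "p \<in> S" for p
      using e that by (auto simp: PiE_def Pi_def)
    then show "d \<in> tdivisors u"
      unfolding d tdivisors_def of_exponents_def
      by (auto simp: less_eq_prod_def tmultiplicity_def intro!: prod_prime_powers_dvd[OF S] u_pos)
  next
    fix d assume "d \<in> tdivisors u"
    then have dvd: "fst d dvd fst u" "fst (snd d) dvd fst (snd u)" "snd (snd d) dvd snd (snd u)"
      by (auto simp: tdivisors_def)
    then have d: "d \<in> pos_triples"
      using u_pos dvd_pos_nat by (auto simp: pos_triples_def)
    have le: "tmultiplicity q d \<le> tmultiplicity q u" for q
      using dvd u_pos by (auto simp: tmultiplicity_def less_eq_prod_def intro!: dvd_imp_multiplicity_le)
    have "tmultiplicity q d = (0, 0, 0)" if "tmultiplicity q u = (0, 0, 0)" for q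
      using le[of q] that by (cases "tmultiplicity q d") (simp add: less_eq_prod_def)
    then have "tprime_factors d \<subseteq> tprime_factors u"
      using tprime_factors_iff[OF d] tprime_factors_iff[OF u] by blast
    then show "d \<in> of_exponents S ` PiE S (\<lambda>p. {..tmultiplicity p u})"
      using of_exponents_restrict_tmultiplicity[OF S d] factors le
      by (intro image_eqI[where x = "restrict (\<lambda>p. tmultiplicity p d) S"]) auto
  qed
qed

definition tpow :: "nat \<Rightarrow> triple \<Rightarrow> triple" where
  "tpow p e = (p ^ fst e, p ^ fst (snd e), p ^ snd (snd e))"

lemma lcm3_eq_prod_prime_powers:
  assumes S: "finite_prime_set S" and u: "u \<in> pos_triples" and factors: "tprime_factors u \<subseteq> S"
  shows "lcm3 (fst u) (fst (snd u)) (snd (snd u)) = (\<Prod>p\<in>S. p ^ tmax (tmultiplicity p u))"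
proof -
  have u_pos: "fst u > 0" "fst (snd u) > 0" "snd (snd u) > 0"
    using u by (auto simp: pos_triples_def)
  have "normalize (lcm3 (fst u) (fst (snd u)) (snd (snd u))) = normalize (\<Prod>p\<in>S. p ^ tmax (tmultiplicity p u))"
  proof (rule multiplicity_eq_imp_eq)
    show "lcm3 (fst u) (fst (snd u)) (snd (snd u)) \<noteq> 0"
      using u_pos by (simp add: lcm3_def lcm_eq_0_iff)
    show "(\<Prod>p\<in>S. p ^ tmax (tmultiplicity p u)) \<noteq> 0"
      using prod_prime_powers_pos[OF S] by (metis not_less0)
    fix q :: nat assume q: "prime q"
    have "multiplicity q (lcm3 (fst u) (fst (snd u)) (snd (snd u))) = tmax (tmultiplicity q u)"
      using u_pos q by (simp add: lcm3_def multiplicity_lcm lcm_eq_0_iff tmax_eq tmultiplicity_def)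
    moreover have "tmultiplicity q u = (0, 0, 0)" if "q \<notin> S"
      using that factors tprime_factors_iff[OF u] q by blast
    ultimately show "multiplicity q (lcm3 (fst u) (fst (snd u)) (snd (snd u)))
        = multiplicity q (\<Prod>p\<in>S. p ^ tmax (tmultiplicity p u))"
      using multiplicity_prod_prime_powers'[OF S q] by (auto simp: tmax_def)
  qed
  then show ?thesis
    by simp
qed

definition cong_solvable :: "int \<times> int \<times> int \<Rightarrow> triple \<Rightarrow> bool" where
  "cong_solvable r u \<longleftrightarrow> (\<exists>n. [n = fst r] (mod int (fst u)) \<and> [n = fst (snd r)] (mod int (fst (snd u)))
                                \<and> [n = snd (snd r)] (mod int (snd (snd u))))"

lemma gsys_eq_cong_solvable:
  "gsys h (fst t) (fst (snd t)) (snd (snd t)) = (if cong_solvable (- int h, 0, int h) t then 1 else 0)"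
  by (simp add: gsys_def cong_solvable_def)

lemma cong_solvable_tdivisor:
  assumes "cong_solvable r u" and "d \<in> tdivisors u"
  shows "cong_solvable r d"
proof -
  obtain n where "[n = fst r] (mod int (fst u))" "[n = fst (snd r)] (mod int (fst (snd u)))"
    "[n = snd (snd r)] (mod int (snd (snd u)))"
    using assms(1) by (auto simp: cong_solvable_def)
  moreover have "int (fst d) dvd int (fst u)" "int (fst (snd d)) dvd int (fst (snd u))"
    "int (snd (snd d)) dvd int (snd (snd u))"
    using assms(2) by (simp_all add: tdivisors_def)
  ultimately show ?thesis
    unfolding cong_solvable_def by (blast intro: cong_dvd_modulus)
qed

lemma coprime_prime_powers:
  "finite_prime_set S \<Longrightarrow> p \<in> S \<Longrightarrow> q \<in> S \<Longrightarrow> p \<noteq> q \<Longrightarrow> coprime (p ^ k) (q ^ l)"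
  using finite_prime_setD(2) primes_coprime by (metis coprime_power_left_iff coprime_power_right_iff)

lemma cong_prod_prime_powers:
  assumes S: "finite_prime_set S" and cong: "\<And>p. p \<in> S \<Longrightarrow> [z = a] (mod int (p ^ k p))"
  shows "[z = a] (mod int (\<Prod>p\<in>S. p ^ k p))"
proof -
  have "coprime (int (p ^ k p)) (int (q ^ k q))" if "p \<in> S" "q \<in> S" "p \<noteq> q" for p q
    using coprime_prime_powers[OF S that] by (simp add: coprime_int_iff)
  then have "[z = a] (mod (\<Prod>p\<in>S. int (p ^ k p)))"
    using cong by (intro cong_cong_prod_coprime) auto
  then show ?thesis
    by (simp add: of_nat_prod)
qed

lemma chinese_remainder_prime_powers:
  fixes N :: "nat \<Rightarrow> int"
  assumes S: "finite_prime_set S"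
  shows "\<exists>x. \<forall>p\<in>S. [x = N p] (mod int (p ^ k p))"
proof -
  have coprime: "\<forall>p\<in>S. \<forall>q\<in>S. p \<noteq> q \<longrightarrow> coprime (p ^ k p) (q ^ k q)"
    by (intro ballI impI coprime_prime_powers[OF S])
  obtain x :: nat where x: "\<forall>p\<in>S. [x = nat (N p mod int (p ^ k p))] (mod p ^ k p)"
    using chinese_remainder_nat[OF finite_prime_setD(1)[OF S] coprime, of "\<lambda>p. nat (N p mod int (p ^ k p))"]
    by blast
  have "[int x = N p] (mod int (p ^ k p))" if "p \<in> S" for p
  proof -
    have "[int x = int (nat (N p mod int (p ^ k p)))] (mod int (p ^ k p))"
      using x that by (simp only: cong_int_iff)
    moreover have "p ^ k p > 0"
      using finite_prime_setD(2)[OF S that] by (simp add: prime_gt_0_nat)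
    ultimately show ?thesis
      by simp
  qed
  then show ?thesis
    by blast
qed

lemma cong_solvable_iff_local:
  assumes S: "finite_prime_set S" and u: "u \<in> pos_triples" and factors: "tprime_factors u \<subseteq> S"
  shows "cong_solvable r u \<longleftrightarrow> (\<forall>p\<in>S. cong_solvable r (tpow p (tmultiplicity p u)))"
proof
  assume "cong_solvable r u"
  moreover have "tpow p (tmultiplicity p u) \<in> tdivisors u" for p
    by (simp add: tdivisors_def tpow_def tmultiplicity_def multiplicity_dvd)
  ultimately show "\<forall>p\<in>S. cong_solvable r (tpow p (tmultiplicity p u))"
    using cong_solvable_tdivisor by blast
next
  assume local: "\<forall>p\<in>S. cong_solvable r (tpow p (tmultiplicity p u))"
  obtain a b c where u_eq: "u = (a, b, c)"
    by (cases u)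
  define va where "va p = multiplicity p a" for p
  define vb where "vb p = multiplicity p b" for p
  define vc where "vc p = multiplicity p c" for p
  have ex_local: "\<forall>p\<in>S. \<exists>n. [n = fst r] (mod int (p ^ va p)) \<and> [n = fst (snd r)] (mod int (p ^ vb p))
      \<and> [n = snd (snd r)] (mod int (p ^ vc p))"
    using local by (simp add: cong_solvable_def tpow_def tmultiplicity_def u_eq va_def vb_def vc_def)
  obtain N where N: "\<forall>p\<in>S. [N p = fst r] (mod int (p ^ va p)) \<and> [N p = fst (snd r)] (mod int (p ^ vb p))
      \<and> [N p = snd (snd r)] (mod int (p ^ vc p))"
    using bchoice[OF ex_local] by blast
  obtain x where x: "\<forall>p\<in>S. [x = N p] (mod int (p ^ max (va p) (max (vb p) (vc p))))"
    using chinese_remainder_prime_powers[OF S, where N = N and k = "\<lambda>p. max (va p) (max (vb p) (vc p))"]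
    by blast
  have dvd: "int (p ^ va p) dvd int (p ^ max (va p) (max (vb p) (vc p)))"
    "int (p ^ vb p) dvd int (p ^ max (va p) (max (vb p) (vc p)))"
    "int (p ^ vc p) dvd int (p ^ max (va p) (max (vb p) (vc p)))" for p
    by (simp_all add: le_imp_power_dvd)
  have x_local: "[x = fst r] (mod int (p ^ va p))" "[x = fst (snd r)] (mod int (p ^ vb p))"
    "[x = snd (snd r)] (mod int (p ^ vc p))" if "p \<in> S" for p
    using cong_trans[OF cong_dvd_modulus[OF _ dvd(1)]] cong_trans[OF cong_dvd_modulus[OF _ dvd(2)]]
      cong_trans[OF cong_dvd_modulus[OF _ dvd(3)]] x N that
    by blast+
  have "[x = fst r] (mod int (\<Prod>p\<in>S. p ^ va p))" "[x = fst (snd r)] (mod int (\<Prod>p\<in>S. p ^ vb p))"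
    "[x = snd (snd r)] (mod int (\<Prod>p\<in>S. p ^ vc p))"
    using x_local by (blast intro: cong_prod_prime_powers[OF S])+
  moreover have "(\<Prod>p\<in>S. p ^ va p) = a" "(\<Prod>p\<in>S. p ^ vb p) = b" "(\<Prod>p\<in>S. p ^ vc p) = c"
    using of_exponents_tmultiplicity[OF S u factors]
    by (simp_all add: u_eq of_exponents_def tmultiplicity_def va_def vb_def vc_def)
  ultimately show "cong_solvable r u"
    unfolding cong_solvable_def u_eq by auto
qed

lemma gsys_multiplicative:
  assumes S: "finite_prime_set S" and u: "u \<in> pos_triples" and factors: "tprime_factors u \<subseteq> S"
  shows "gsys h (fst u) (fst (snd u)) (snd (snd u)) =
    (\<Prod>p\<in>S. gsys h (p ^ fst (tmultiplicity p u)) (p ^ fst (snd (tmultiplicity p u))) (p ^ snd (snd (tmultiplicity p u))))"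
proof -
  have local: "gsys h (p ^ fst (tmultiplicity p u)) (p ^ fst (snd (tmultiplicity p u))) (p ^ snd (snd (tmultiplicity p u)))
      = (if cong_solvable (- int h, 0, int h) (tpow p (tmultiplicity p u)) then 1 else 0)" for p
    using gsys_eq_cong_solvable[of h "tpow p (tmultiplicity p u)"] by (simp add: tpow_def)
  show ?thesis
    unfolding local gsys_eq_cong_solvable cong_solvable_iff_local[OF S u factors]
    using finite_prime_setD(1)[OF S] by (auto simp: prod_zero_iff)
qed

definition lcm_term :: "nat \<Rightarrow> triple \<Rightarrow> real" where
  "lcm_term h u = gsys h (fst u) (fst (snd u)) (snd (snd u)) / real (lcm3 (fst u) (fst (snd u)) (snd (snd u)))"

lemma lcm_term_multiplicative:
  assumes S: "finite_prime_set S" and u: "u \<in> pos_triples" and factors: "tprime_factors u \<subseteq> S"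
  shows "lcm_term h u = (\<Prod>p\<in>S. local_term h p (tmultiplicity p u))"
proof -
  have "local_term h p e = gsys h (p ^ fst e) (p ^ fst (snd e)) (p ^ snd (snd e)) / real (p ^ tmax e)" for p e
    by (cases e) (simp add: local_term_eq)
  then show ?thesis
    by (simp add: lcm_term_def prod_dividef gsys_multiplicative[OF S u factors]
        lcm3_eq_prod_prime_powers[OF S u factors] of_nat_prod del: of_nat_power)
qed

definition lcm_kernel :: "nat \<Rightarrow> triple \<Rightarrow> real" where
  "lcm_kernel h d = (\<Prod>p\<in>tprime_factors d. local_kernel h p (tmultiplicity p d))"

lemma lcm_kernel_eq_prod:
  assumes S: "finite_prime_set S" and d: "d \<in> pos_triples" and factors: "tprime_factors d \<subseteq> S"
  shows "lcm_kernel h d = (\<Prod>p\<in>S. local_kernel h p (tmultiplicity p d))"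
  unfolding lcm_kernel_def
proof (rule prod.mono_neutral_left[OF finite_prime_setD(1)[OF S] factors])
  show "\<forall>p\<in>S - tprime_factors d. local_kernel h p (tmultiplicity p d) = 1"
    using tprime_factors_iff[OF d] finite_prime_setD(2)[OF S] local_kernel_zero by auto
qed

lemma lcm_kernel_of_exponents:
  assumes S: "finite_prime_set S"
  shows "lcm_kernel h (of_exponents S e) = (\<Prod>p\<in>S. local_kernel h p (e p))"
proof -
  have "lcm_kernel h (of_exponents S e) = (\<Prod>p\<in>S. local_kernel h p (tmultiplicity p (of_exponents S e)))"
    by (rule lcm_kernel_eq_prod[OF S of_exponents_pos[OF S] tprime_factors_of_exponents[OF S]])
  also have "\<dots> = (\<Prod>p\<in>S. local_kernel h p (e p))"
    using tmultiplicity_of_exponents[OF S] finite_prime_setD(2)[OF S] by (intro prod.cong) auto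
  finally show ?thesis .
qed

lemma lcm_term_eq_sum_tdivisors:
  assumes u: "u \<in> pos_triples"
  shows "lcm_term h u = (\<Sum>d\<in>tdivisors u. lcm_kernel h d * real (tprod d)) / real (tprod u)"
proof -
  define S where "S = tprime_factors u"
  have S: "finite_prime_set S"
    by (simp add: S_def finite_prime_set_tprime_factors)
  have factors: "tprime_factors u \<subseteq> S"
    by (simp add: S_def)
  have pos: "p > 0" if "p \<in> S" for p
    using finite_prime_setD(2)[OF S that] by (simp add: prime_gt_0_nat)
  have "(\<Sum>d\<in>tdivisors u. lcm_kernel h d * real (tprod d))
      = (\<Sum>e\<in>PiE S (\<lambda>p. {..tmultiplicity p u}). lcm_kernel h (of_exponents S e) * real (tprod (of_exponents S e)))"
    by (rule sum.reindex_bij_betw[OF bij_betw_of_exponents_tdivisors[OF S u factors], symmetric])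
  also have "\<dots> = (\<Sum>e\<in>PiE S (\<lambda>p. {..tmultiplicity p u}). \<Prod>p\<in>S. real p ^ tsum (e p) * local_kernel h p (e p))"
    by (simp add: lcm_kernel_of_exponents[OF S] tprod_of_exponents prod.distrib mult.commute)
  also have "\<dots> = (\<Prod>p\<in>S. \<Sum>e\<in>{..tmultiplicity p u}. real p ^ tsum e * local_kernel h p e)"
    by (rule prod_sum_PiE[symmetric]) (simp_all add: finite_prime_setD(1)[OF S])
  also have "\<dots> = (\<Prod>p\<in>S. real p ^ tsum (tmultiplicity p u) * local_term h p (tmultiplicity p u))"
    by (intro prod.cong) (simp_all add: local_kernel_box_sum pos)
  also have "\<dots> = real (tprod u) * lcm_term h u"
    using tprod_of_exponents[of S "\<lambda>p. tmultiplicity p u"]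
    by (simp add: of_exponents_tmultiplicity[OF S u factors] lcm_term_multiplicative[OF S u factors] prod.distrib)
  finally show ?thesis
    using tprod_pos[OF u] by simp
qed

section \<open>The kernel and its Euler product\<close>

(* Any exponent below 1/3 would do: the local kernel is O(p^-tmax e) and tsum e <= 3 tmax e. *)
definition weighted_kernel :: "nat \<Rightarrow> triple \<Rightarrow> real" where
  "weighted_kernel h d = \<bar>lcm_kernel h d\<bar> * real (tprod d) powr (1/4)"

lemma weighted_kernel_nonneg: "weighted_kernel h d \<ge> 0"
  by (simp add: weighted_kernel_def)

lemma weighted_kernel_of_exponents:
  assumes S: "finite_prime_set S"
  shows "weighted_kernel h (of_exponents S e) = (\<Prod>p\<in>S. local_weight h p (e p))"
proof -
  have "(real p ^ k) powr (1/4) = (real p powr (1/4)) ^ k" if "p \<in> S" for p k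
    using finite_prime_setD(2)[OF S that]
    by (simp add: powr_realpow[symmetric] powr_powr powr_power prime_gt_0_nat mult.commute)
  then have "real (tprod (of_exponents S e)) powr (1/4) = (\<Prod>p\<in>S. (real p powr (1/4)) ^ tsum (e p))"
    by (simp add: tprod_of_exponents prod_powr_distrib)
  then show ?thesis
    by (simp add: weighted_kernel_def local_weight_def lcm_kernel_of_exponents[OF S] prod.distrib abs_prod)
qed

lemma abs_lcm_kernel_le_weighted:
  assumes d: "d \<in> pos_triples" and y: "0 < y" "y \<le> real (tprod d)"
  shows "\<bar>lcm_kernel h d\<bar> \<le> weighted_kernel h d * y powr (-1/4)"
proof -
  have "\<bar>lcm_kernel h d\<bar> * y powr (1/4) \<le> weighted_kernel h d"
    unfolding weighted_kernel_def using y by (intro mult_left_mono powr_mono2) auto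
  then have "\<bar>lcm_kernel h d\<bar> * y powr (1/4) * y powr (-1/4) \<le> weighted_kernel h d * y powr (-1/4)"
    by (rule mult_right_mono) simp
  then show ?thesis
    using y by (simp add: mult.assoc flip: powr_add)
qed

lemma sum_prod_le_prod_infsum:
  fixes \<psi> :: "'a \<Rightarrow> 'b \<Rightarrow> real"
  assumes S: "finite S" and G: "finite G" "G \<subseteq> PiE S (\<lambda>_. UNIV)"
    and summable: "\<And>p. p \<in> S \<Longrightarrow> \<psi> p summable_on UNIV" and nonneg: "\<And>p x. 0 \<le> \<psi> p x"
  shows "(\<Sum>g\<in>G. \<Prod>p\<in>S. \<psi> p (g p)) \<le> (\<Prod>p\<in>S. infsum (\<psi> p) UNIV)"
proof -
  define B where "B p = (\<lambda>g. g p) ` G" for p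
  have finite_B: "finite (B p)" for p
    using G by (simp add: B_def)
  have "G \<subseteq> PiE S B"
    using G by (auto simp: B_def PiE_def Pi_def)
  then have "(\<Sum>g\<in>G. \<Prod>p\<in>S. \<psi> p (g p)) \<le> (\<Sum>g\<in>PiE S B. \<Prod>p\<in>S. \<psi> p (g p))"
    using S finite_B nonneg by (intro sum_mono2) (auto simp: finite_PiE prod_nonneg)
  also have "\<dots> = (\<Prod>p\<in>S. \<Sum>x\<in>B p. \<psi> p x)"
    by (rule prod_sum_PiE[symmetric]) (simp_all add: S finite_B)
  also have "\<dots> \<le> (\<Prod>p\<in>S. infsum (\<psi> p) UNIV)"
    using summable nonneg finite_B
    by (intro prod_mono conjI sum_nonneg finite_sum_le_infsum) auto
  finally show ?thesis .
qed

definition primes_atMost :: "nat \<Rightarrow> nat set" where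
  "primes_atMost n = {p. prime p \<and> p \<le> n}"

definition bad_primes :: "nat \<Rightarrow> nat set" where
  "bad_primes h = {p. prime p \<and> p dvd 2 * h}"

lemma finite_prime_set_primes_atMost: "finite_prime_set (primes_atMost n)"
  by (simp add: finite_prime_set_def primes_atMost_def)

lemma bad_primes_subset: "h > 0 \<Longrightarrow> 2 * h \<le> n \<Longrightarrow> bad_primes h \<subseteq> primes_atMost n"
  by (auto simp: bad_primes_def primes_atMost_def dest: dvd_imp_le)

lemma smooth_triples_primes_atMost:
  assumes "d \<in> pos_triples" "tprod d \<le> n"
  shows "d \<in> smooth_triples (primes_atMost n)"
proof -
  have "p \<le> n" if "p dvd tprod d" for p
    using dvd_imp_le[OF that tprod_pos[OF assms(1)]] assms(2) by simp
  then show ?thesis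
    using assms(1) by (auto simp: smooth_triples_def primes_atMost_def tprime_factors_def in_prime_factors_iff)
qed

lemma prod_infsum_local_weight_le:
  assumes S: "finite_prime_set S" and bad: "bad_primes h \<subseteq> S"
  shows "(\<Prod>p\<in>S. infsum (local_weight h p) UNIV) \<le>
    (\<Prod>p\<in>bad_primes h. infsum (local_weight h p) UNIV) * exp (5 * (\<Sum>n. real n powr (-3/2)))"
proof -
  have "(\<Prod>p\<in>S - bad_primes h. infsum (local_weight h p) UNIV) \<le> (\<Prod>p\<in>S - bad_primes h. exp (5 * real p powr (-3/2)))"
  proof (rule prod_mono)
    fix p assume "p \<in> S - bad_primes h"
    then have p: "prime p" and coprime: "\<not> p dvd 2 * h"
      using finite_prime_setD(2)[OF S] by (auto simp: bad_primes_def)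
    have "infsum (local_weight h p) UNIV \<le> 1 + 5 * real p powr (-3/2)"
      by (rule local_weight_infsum_coprime[OF p coprime])
    also have "\<dots> \<le> exp (5 * real p powr (-3/2))"
      by (rule exp_ge_add_one_self)
    finally show "0 \<le> infsum (local_weight h p) UNIV \<and> infsum (local_weight h p) UNIV \<le> exp (5 * real p powr (-3/2))"
      by (simp add: infsum_nonneg local_weight_nonneg)
  qed
  also have "\<dots> = exp (5 * (\<Sum>p\<in>S - bad_primes h. real p powr (-3/2)))"
    using finite_prime_setD(1)[OF S] by (simp add: exp_sum sum_distrib_left)
  also have "\<dots> \<le> exp (5 * (\<Sum>n. real n powr (-3/2)))"
    using finite_prime_setD(1)[OF S] by (simp add: sum_le_suminf summable_real_powr_iff)
  finally have good: "(\<Prod>p\<in>S - bad_primes h. infsum (local_weight h p) UNIV) \<le> exp (5 * (\<Sum>n. real n powr (-3/2)))" .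
  have "(\<Prod>p\<in>S. infsum (local_weight h p) UNIV)
      = (\<Prod>p\<in>bad_primes h. infsum (local_weight h p) UNIV) * (\<Prod>p\<in>S - bad_primes h. infsum (local_weight h p) UNIV)"
    using prod.subset_diff[OF bad finite_prime_setD(1)[OF S]] by (simp add: mult.commute)
  also have "\<dots> \<le> (\<Prod>p\<in>bad_primes h. infsum (local_weight h p) UNIV) * exp (5 * (\<Sum>n. real n powr (-3/2)))"
    by (intro mult_left_mono good prod_nonneg infsum_nonneg local_weight_nonneg)
  finally show ?thesis .
qed

lemma sum_weighted_kernel_le:
  assumes h: "h > 0" and F: "finite F" "F \<subseteq> pos_triples"
  shows "sum (weighted_kernel h) F \<le>
    (\<Prod>p\<in>bad_primes h. infsum (local_weight h p) UNIV) * exp (5 * (\<Sum>n. real n powr (-3/2)))"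
proof -
  define S where "S = primes_atMost (max (2 * h) (\<Sum>d\<in>F. tprod d))"
  have S: "finite_prime_set S"
    by (simp add: S_def finite_prime_set_primes_atMost)
  have smooth: "d \<in> smooth_triples S" if "d \<in> F" for d
    unfolding S_def using that F member_le_sum[of d F tprod]
    by (intro smooth_triples_primes_atMost) auto
  define G where "G = (\<lambda>d. restrict (\<lambda>p. tmultiplicity p d) S) ` F"
  have F_eq: "F = of_exponents S ` G"
    using smooth of_exponents_restrict_tmultiplicity[OF S]
    by (force simp: G_def smooth_triples_def image_image)
  have G: "finite G" "G \<subseteq> PiE S (\<lambda>_. UNIV)"
    using F by (auto simp: G_def)
  have "sum (weighted_kernel h) F = (\<Sum>g\<in>G. \<Prod>p\<in>S. local_weight h p (g p))"
    unfolding F_eq using inj_on_subset[OF inj_on_of_exponents[OF S] G(2)]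
    by (simp add: sum.reindex weighted_kernel_of_exponents[OF S])
  also have "\<dots> \<le> (\<Prod>p\<in>S. infsum (local_weight h p) UNIV)"
    using finite_prime_setD[OF S] G local_weight_summable local_weight_nonneg
    by (intro sum_prod_le_prod_infsum) auto
  also have "\<dots> \<le> (\<Prod>p\<in>bad_primes h. infsum (local_weight h p) UNIV) * exp (5 * (\<Sum>n. real n powr (-3/2)))"
    using h unfolding S_def by (intro prod_infsum_local_weight_le[OF S[unfolded S_def]] bad_primes_subset) auto
  finally show ?thesis .
qed

lemma weighted_kernel_summable:
  assumes "h > 0"
  shows "weighted_kernel h summable_on pos_triples"
proof (rule nonneg_bdd_above_summable_on)
  show "bdd_above (sum (weighted_kernel h) ` {F. F \<subseteq> pos_triples \<and> finite F})"
    using sum_weighted_kernel_le[OF assms] by (intro bdd_aboveI2) auto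
qed (simp add: weighted_kernel_nonneg)

lemma lcm_kernel_abs_summable:
  assumes "h > 0"
  shows "(\<lambda>d. \<bar>lcm_kernel h d\<bar>) summable_on pos_triples"
  using abs_lcm_kernel_le_weighted[of _ 1 h] tprod_pos
  by (intro summable_on_comparison_test[OF weighted_kernel_summable[OF assms]]) (auto simp: Suc_le_eq)

lemma lcm_kernel_summable: "h > 0 \<Longrightarrow> lcm_kernel h summable_on pos_triples"
  using lcm_kernel_abs_summable summable_on_iff_abs_summable_on_real[of "lcm_kernel h"] by simp

lemma abs_infsum_lcm_kernel_diff_le:
  assumes h: "h > 0" and A: "A \<subseteq> pos_triples" and c: "c \<ge> 0"
    and bound: "\<And>d. d \<in> pos_triples - A \<Longrightarrow> \<bar>lcm_kernel h d\<bar> \<le> weighted_kernel h d * c"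
  shows "\<bar>infsum (lcm_kernel h) pos_triples - infsum (lcm_kernel h) A\<bar> \<le> infsum (weighted_kernel h) pos_triples * c"
proof -
  have summable: "lcm_kernel h summable_on pos_triples - A" "(\<lambda>d. \<bar>lcm_kernel h d\<bar>) summable_on pos_triples - A"
    "weighted_kernel h summable_on pos_triples - A"
    using summable_on_subset lcm_kernel_summable[OF h] lcm_kernel_abs_summable[OF h]
      weighted_kernel_summable[OF h] by blast+
  have "infsum (lcm_kernel h) pos_triples - infsum (lcm_kernel h) A = infsum (lcm_kernel h) (pos_triples - A)"
    using A lcm_kernel_summable[OF h] by (simp add: infsum_Diff summable_on_subset)
  also have "\<bar>\<dots>\<bar> \<le> infsum (\<lambda>d. \<bar>lcm_kernel h d\<bar>) (pos_triples - A)"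
    using norm_infsum_bound[of "lcm_kernel h" "pos_triples - A"] summable(2) by simp
  also have "\<dots> \<le> infsum (\<lambda>d. weighted_kernel h d * c) (pos_triples - A)"
    using bound summable by (intro infsum_mono summable_on_cmult_left) auto
  also have "\<dots> = infsum (weighted_kernel h) (pos_triples - A) * c"
    by (rule infsum_cmult_left')
  also have "\<dots> \<le> infsum (weighted_kernel h) pos_triples * c"
    using c weighted_kernel_summable[OF h] summable(3) weighted_kernel_nonneg
    by (intro mult_right_mono infsum_mono2) auto
  finally show ?thesis .
qed

lemma infsum_lcm_kernel_smooth:
  assumes S: "finite_prime_set S"
  shows "infsum (lcm_kernel h) (smooth_triples S) = (\<Prod>p\<in>S. infsum (local_kernel h p) UNIV)"
proof -
  have "infsum (lcm_kernel h) (smooth_triples S) = infsum (\<lambda>e. lcm_kernel h (of_exponents S e)) (PiE S (\<lambda>_. UNIV))"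
    by (rule infsum_reindex_bij_betw[OF bij_betw_of_exponents_smooth[OF S], symmetric])
  also have "\<dots> = infsum (\<lambda>e. \<Prod>p\<in>S. local_kernel h p (e p)) (PiE S (\<lambda>_. UNIV))"
    by (simp add: lcm_kernel_of_exponents[OF S])
  also have "\<dots> = (\<Prod>p\<in>S. infsum (local_kernel h p) UNIV)"
  proof (rule infsum_prod_PiE_abs[OF finite_prime_setD(1)[OF S]])
    fix p assume "p \<in> S"
    then show "(\<lambda>e. norm (local_kernel h p e)) summable_on UNIV"
      using local_kernel_summable[OF finite_prime_setD(2)[OF S], of p h]
        summable_on_iff_abs_summable_on_real[of "local_kernel h p" UNIV] by simp
  qed
  finally show ?thesis .
qed

definition euler_factor :: "nat \<Rightarrow> real" where
  "euler_factor p = (if prime p then (1 - 1 / real p) ^ 2 * (1 + 2 / real p) else 1)"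

lemma prod_infsum_local_kernel:
  assumes h: "h > 0" and n: "2 * h \<le> n"
  shows "(\<Prod>p\<in>primes_atMost n. infsum (local_kernel h p) UNIV) = Delta h * (\<Prod>i\<le>n. euler_factor i)"
proof -
  have finite: "finite (primes_atMost n)"
    using finite_prime_set_primes_atMost finite_prime_setD(1) by blast
  have bad: "bad_primes h \<subseteq> primes_atMost n"
    by (rule bad_primes_subset[OF h n])
  have "infsum (local_kernel h p) UNIV
      = (1 - 1 / real p) * inverse (1 + 2 / real p) * local_sum h p * euler_factor p"
    if "p \<in> bad_primes h" for p
  proof -
    have p: "prime p"
      using that by (simp add: bad_primes_def)
    have "1 + 2 / real p \<noteq> 0"
      using prime_gt_0_nat[OF p] by (smt (verit) divide_pos_pos of_nat_0_less_iff)
    then have "inverse (1 + 2 / real p) * (1 + 2 / real p) = 1"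
      by simp
    then have "(1 - 1 / real p) ^ 3 * local_sum h p
        = (1 - 1 / real p) * inverse (1 + 2 / real p) * local_sum h p * ((1 - 1 / real p) ^ 2 * (1 + 2 / real p))"
      by (simp add: power2_eq_square power3_eq_cube mult_ac)
    then show ?thesis
      using infsumI[OF has_sum_local_kernel[OF p]] p by (simp add: euler_factor_def)
  qed
  then have "(\<Prod>p\<in>bad_primes h. infsum (local_kernel h p) UNIV) = Delta h * (\<Prod>p\<in>bad_primes h. euler_factor p)"
    by (simp add: Delta_def bad_primes_def prod.distrib)
  moreover have "infsum (local_kernel h p) UNIV = euler_factor p" if "p \<in> primes_atMost n - bad_primes h" for p
    using that infsumI[OF has_sum_local_kernel_coprime]
    by (simp add: primes_atMost_def bad_primes_def euler_factor_def)
  moreover have "(\<Prod>i\<le>n. euler_factor i) = (\<Prod>p\<in>primes_atMost n. euler_factor p)"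
    by (rule prod.mono_neutral_right) (auto simp: primes_atMost_def euler_factor_def)
  ultimately show ?thesis
    using finite bad by (simp add: prod.subset_diff[OF bad finite])
qed

lemma convergent_prod_euler_factor: "convergent_prod euler_factor"
proof -
  have bound: "norm (euler_factor n - 1) \<le> 3 * real n powr (-2)" for n
  proof (cases "prime n")
    case True
    then have n: "real n \<ge> 2"
      using prime_ge_2_nat by simp
    have "real n powr 2 = real n ^ 2"
      using powr_realpow[of "real n" 2] n by simp
    then have powr: "real n powr (-2) = 1 / real n ^ 2"
      by (simp add: powr_minus divide_inverse)
    have "euler_factor n - 1 = - 3 / real n ^ 2 + 2 / real n ^ 3"
      using True n by (simp add: euler_factor_def field_simps power2_eq_square power3_eq_cube)
    moreover have "2 / real n ^ 3 \<le> 3 / real n ^ 2"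
      using n by (simp add: field_simps power2_eq_square power3_eq_cube)
    moreover have "0 \<le> 2 / real n ^ 3"
      using n by simp
    ultimately have "\<bar>euler_factor n - 1\<bar> \<le> 3 / real n ^ 2"
      by simp
    then show ?thesis
      using powr by simp
  qed (simp add: euler_factor_def)
  have "summable (\<lambda>n. 3 * real n powr (-2))"
    by (intro summable_mult) (simp add: summable_real_powr_iff)
  then have "summable (\<lambda>n. norm (euler_factor n - 1))"
    by (rule summable_comparison_test'[where N = 0]) (use bound in simp)
  then show ?thesis
    by (intro abs_convergent_prod_imp_convergent_prod) (simp add: abs_convergent_prod_conv_summable)
qed

lemma infsum_lcm_kernel:
  assumes h: "h > 0"
  shows "infsum (lcm_kernel h) pos_triples = Delta h * euler_prod"
proof -
  define X where "X n = infsum (lcm_kernel h) (smooth_triples (primes_atMost n))" for n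
  have "euler_prod = prodinf euler_factor"
    by (simp add: euler_prod_def euler_factor_def[abs_def])
  then have "(\<lambda>n. \<Prod>i\<le>n. euler_factor i) \<longlonglongrightarrow> euler_prod"
    using convergent_prod_LIMSEQ[OF convergent_prod_euler_factor] by simp
  then have "(\<lambda>n. Delta h * (\<Prod>i\<le>n. euler_factor i)) \<longlonglongrightarrow> Delta h * euler_prod"
    by (rule tendsto_mult_left)
  moreover have "\<forall>\<^sub>F n in sequentially. Delta h * (\<Prod>i\<le>n. euler_factor i) = X n"
    using eventually_ge_at_top[of "2 * h"]
    by eventually_elim
       (simp add: X_def infsum_lcm_kernel_smooth finite_prime_set_primes_atMost prod_infsum_local_kernel[OF h])
  ultimately have lim_X: "X \<longlonglongrightarrow> Delta h * euler_prod"
    by (rule Lim_transform_eventually)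
  have tail: "\<bar>infsum (lcm_kernel h) pos_triples - X n\<bar> \<le> infsum (weighted_kernel h) pos_triples * real n powr (-1/4)"
    if "n \<ge> 1" for n
    unfolding X_def
  proof (rule abs_infsum_lcm_kernel_diff_le[OF h])
    fix d assume d: "d \<in> pos_triples - smooth_triples (primes_atMost n)"
    then have "real n \<le> real (tprod d)"
      using smooth_triples_primes_atMost[of d n] by force
    then show "\<bar>lcm_kernel h d\<bar> \<le> weighted_kernel h d * real n powr (-1/4)"
      using d that by (intro abs_lcm_kernel_le_weighted) auto
  qed (auto simp: smooth_triples_def)
  have "(\<lambda>n. infsum (weighted_kernel h) pos_triples * real n powr (-1/4)) \<longlonglongrightarrow> 0"
    by (intro tendsto_mult_right_zero tendsto_neg_powr) (simp_all add: filterlim_real_sequentially)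
  moreover have "\<forall>\<^sub>F n in sequentially.
      norm (X n - infsum (lcm_kernel h) pos_triples) \<le> infsum (weighted_kernel h) pos_triples * real n powr (-1/4)"
    using eventually_ge_at_top[of 1] by eventually_elim (use tail in \<open>simp add: abs_minus_commute\<close>)
  ultimately have "(\<lambda>n. X n - infsum (lcm_kernel h) pos_triples) \<longlonglongrightarrow> 0"
    by (rule Lim_null_comparison[rotated])
  then have "X \<longlonglongrightarrow> infsum (lcm_kernel h) pos_triples"
    by (rule LIM_zero_cancel)
  then show ?thesis
    using lim_X LIMSEQ_unique by blast
qed

lemma Delta_nonzero:
  assumes h: "h > 0"
  shows "Delta h \<noteq> 0"
proof -
  have "(1 - 1 / real p) * inverse (1 + 2 / real p) * local_sum h p \<noteq> 0" if "p \<in> bad_primes h" for p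
  proof -
    have p: "prime p"
      using that by (simp add: bad_primes_def)
    have "local_term h p summable_on UNIV"
      using prime_gt_0_nat[OF p] by (intro summable_on_of_bound[OF prime_ge_2_nat[OF p] abs_local_term_le]) auto
    then have "(\<Sum>e\<in>{(0, 0, 0)}. local_term h p e) \<le> local_sum h p"
      unfolding local_sum_eq_infsum using local_term_nonneg
      by (intro finite_sum_le_infsum) auto
    moreover have "1 - 1 / real p \<noteq> 0" "1 + 2 / real p \<noteq> 0"
      using prime_ge_2_nat[OF p] by (auto simp: field_simps)
    ultimately show ?thesis
      by (auto simp: local_term_zero)
  qed
  moreover have "finite (bad_primes h)"
    using bad_primes_subset[OF h order_refl] finite_prime_set_primes_atMost finite_prime_setD(1) finite_subset
    by blast
  ultimately show ?thesis
    unfolding Delta_def bad_primes_def[symmetric] by (subst prod_zero_iff) blast+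
qed

section \<open>Asymptotics of the triple sum\<close>

definition tbox :: "triple \<Rightarrow> triple set" where
  "tbox M = {1..fst M} \<times> {1..fst (snd M)} \<times> {1..snd (snd M)}"

definition tdiv :: "triple \<Rightarrow> triple \<Rightarrow> triple" where
  "tdiv u d = (fst u div fst d, fst (snd u) div fst (snd d), snd (snd u) div snd (snd d))"

definition tmul :: "triple \<Rightarrow> triple \<Rightarrow> triple" where
  "tmul d m = (fst d * fst m, fst (snd d) * fst (snd m), snd (snd d) * snd (snd m))"

lemma finite_tbox [simp]: "finite (tbox M)"
  by (simp add: tbox_def)

lemma tbox_subset_pos_triples: "tbox M \<subseteq> pos_triples"
  by (auto simp: tbox_def pos_triples_def)

lemma Ssum_eq_sum_tbox: "Ssum h x = (\<Sum>u\<in>tbox (nat \<lfloor>x\<rfloor>, nat \<lfloor>x\<rfloor>, nat \<lfloor>x\<rfloor>). lcm_term h u)"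
  by (simp add: Ssum_def tbox_def lcm_term_def sum.cartesian_product case_prod_unfold)

lemma divisor_in_range:
  fixes d u N :: nat
  assumes "1 \<le> u" "u \<le> N" "d dvd u"
  shows "1 \<le> d \<and> d \<le> N \<and> 1 \<le> u div d \<and> u div d \<le> N div d \<and> d * (u div d) = u"
proof -
  have d: "d > 0"
    using assms by (metis dvd_pos_nat less_le_trans zero_less_one)
  have "d \<le> u" "u div d > 0"
    using assms d by (auto simp: dvd_imp_le dvd_div_eq_0_iff)
  moreover have "u div d \<le> N div d"
    using assms by (simp add: div_le_mono)
  ultimately show ?thesis
    using assms d by auto
qed

lemma multiple_in_range:
  fixes d m N :: nat
  assumes "1 \<le> d" "d \<le> N" "1 \<le> m" "m \<le> N div d"
  shows "1 \<le> d * m \<and> d * m \<le> N \<and> d dvd d * m \<and> (d * m) div d = m"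
proof -
  have "d * m \<le> d * (N div d)"
    using assms by simp
  also have "\<dots> \<le> N"
    by simp
  finally show ?thesis
    using assms by auto
qed

lemma sum_tbox_tdivisors_swap:
  "(\<Sum>u\<in>tbox M. \<Sum>d\<in>tdivisors u. G d (tdiv u d)) = (\<Sum>d\<in>tbox M. \<Sum>m\<in>tbox (tdiv M d). G d m)"
proof -
  have finite_tdivisors: "finite (tdivisors u)" if "u \<in> tbox M" for u
  proof -
    have "tdivisors u \<subseteq> {..fst u} \<times> {..fst (snd u)} \<times> {..snd (snd u)}"
      using that by (auto simp: tdivisors_def tbox_def dest: dvd_imp_le)
    then show ?thesis
      by (rule finite_subset) simp
  qed
  have "(\<Sum>u\<in>tbox M. \<Sum>d\<in>tdivisors u. G d (tdiv u d)) = (\<Sum>(u, d)\<in>Sigma (tbox M) tdivisors. G d (tdiv u d))"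
    using finite_tdivisors by (intro sum.Sigma) auto
  also have "\<dots> = (\<Sum>(d, m)\<in>Sigma (tbox M) (\<lambda>d. tbox (tdiv M d)). G d m)"
  proof (rule sum.reindex_bij_witness[of _ "\<lambda>(d, m). (tmul d m, d)" "\<lambda>(u, d). (d, tdiv u d)"])
    fix a assume "a \<in> Sigma (tbox M) tdivisors"
    then obtain u1 u2 u3 d1 d2 d3 where a: "a = ((u1, u2, u3), (d1, d2, d3))"
      and bounds: "1 \<le> u1" "u1 \<le> fst M" "d1 dvd u1" "1 \<le> u2" "u2 \<le> fst (snd M)" "d2 dvd u2"
        "1 \<le> u3" "u3 \<le> snd (snd M)" "d3 dvd u3"
      by (cases a) (auto simp: tbox_def tdivisors_def)
    note div1 = divisor_in_range[OF bounds(1-3)] and div2 = divisor_in_range[OF bounds(4-6)]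
      and div3 = divisor_in_range[OF bounds(7-9)]
    show "(case case a of (u, d) \<Rightarrow> (d, tdiv u d) of (d, m) \<Rightarrow> (tmul d m, d)) = a"
      using div1 div2 div3 by (simp add: a tdiv_def tmul_def)
    show "(case a of (u, d) \<Rightarrow> (d, tdiv u d)) \<in> Sigma (tbox M) (\<lambda>d. tbox (tdiv M d))"
      using div1 div2 div3 by (simp add: a tdiv_def tbox_def)
    show "(case case a of (u, d) \<Rightarrow> (d, tdiv u d) of (d, m) \<Rightarrow> G d m) = (case a of (u, d) \<Rightarrow> G d (tdiv u d))"
      by (simp add: a)
  next
    fix b assume "b \<in> Sigma (tbox M) (\<lambda>d. tbox (tdiv M d))"
    then obtain d1 d2 d3 m1 m2 m3 where b: "b = ((d1, d2, d3), (m1, m2, m3))"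
      and bounds: "1 \<le> d1" "d1 \<le> fst M" "1 \<le> m1" "m1 \<le> fst M div d1"
        "1 \<le> d2" "d2 \<le> fst (snd M)" "1 \<le> m2" "m2 \<le> fst (snd M) div d2"
        "1 \<le> d3" "d3 \<le> snd (snd M)" "1 \<le> m3" "m3 \<le> snd (snd M) div d3"
      by (cases b) (auto simp: tbox_def tdiv_def)
    note mul1 = multiple_in_range[OF bounds(1-4)] and mul2 = multiple_in_range[OF bounds(5-8)]
      and mul3 = multiple_in_range[OF bounds(9-12)]
    show "(case case b of (d, m) \<Rightarrow> (tmul d m, d) of (u, d) \<Rightarrow> (d, tdiv u d)) = b"
      using mul1 mul2 mul3 by (simp add: b tdiv_def tmul_def)
    show "(case b of (d, m) \<Rightarrow> (tmul d m, d)) \<in> Sigma (tbox M) tdivisors"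
      using mul1 mul2 mul3 by (simp add: b tmul_def tbox_def tdivisors_def)
  qed
  also have "\<dots> = (\<Sum>d\<in>tbox M. \<Sum>m\<in>tbox (tdiv M d). G d m)"
    by (rule sum.Sigma[symmetric]) auto
  finally show ?thesis .
qed

lemma sum_tbox_inverse_tprod:
  "(\<Sum>m\<in>tbox M. 1 / real (tprod m)) = harm (fst M) * harm (fst (snd M)) * harm (snd (snd M))"
proof -
  have "(\<Sum>m\<in>tbox M. 1 / real (tprod m)) =
      (\<Sum>a\<in>{1..fst M}. inverse (real a) * (\<Sum>b\<in>{1..fst (snd M)}. inverse (real b) *
        (\<Sum>c\<in>{1..snd (snd M)}. inverse (real c))))"
    by (simp add: tbox_def sum.cartesian_product tprod_def case_prod_unfold divide_inverse
        sum_distrib_left mult_ac)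
  also have "\<dots> = harm (fst M) * (harm (fst (snd M)) * harm (snd (snd M)))"
    by (simp only: harm_def sum_distrib_right[symmetric])
  finally show ?thesis
    by (simp add: mult_ac)
qed

lemma tprod_tdiv:
  assumes "d \<in> tdivisors u"
  shows "tprod u = tprod d * tprod (tdiv u d)"
  using assms by (auto simp: tdivisors_def tprod_def tdiv_def elim!: dvdE)

lemma Ssum_eq_sum_lcm_kernel:
  fixes x :: real
  defines "N \<equiv> nat \<lfloor>x\<rfloor>"
  shows "Ssum h x = (\<Sum>d\<in>tbox (N, N, N).
    lcm_kernel h d * (harm (N div fst d) * harm (N div fst (snd d)) * harm (N div snd (snd d))))"
proof -
  have "lcm_term h u = (\<Sum>d\<in>tdivisors u. lcm_kernel h d / real (tprod (tdiv u d)))" if "u \<in> tbox (N, N, N)" for u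
  proof -
    have u: "u \<in> pos_triples"
      using that tbox_subset_pos_triples by blast
    have "lcm_kernel h d * real (tprod d) / real (tprod u) = lcm_kernel h d / real (tprod (tdiv u d))"
      if "d \<in> tdivisors u" for d
      using tprod_tdiv[OF that] tprod_pos[OF u] by simp
    then show ?thesis
      by (simp add: lcm_term_eq_sum_tdivisors[OF u] sum_divide_distrib)
  qed
  then have "Ssum h x = (\<Sum>u\<in>tbox (N, N, N). \<Sum>d\<in>tdivisors u. lcm_kernel h d / real (tprod (tdiv u d)))"
    by (simp add: Ssum_eq_sum_tbox N_def)
  also have "\<dots> = (\<Sum>d\<in>tbox (N, N, N). \<Sum>m\<in>tbox (tdiv (N, N, N) d). lcm_kernel h d / real (tprod m))"
    by (rule sum_tbox_tdivisors_swap)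
  also have "\<dots> = (\<Sum>d\<in>tbox (N, N, N). lcm_kernel h d * (\<Sum>m\<in>tbox (tdiv (N, N, N) d). 1 / real (tprod m)))"
    by (simp add: sum_distrib_left)
  finally show ?thesis
    by (simp add: sum_tbox_inverse_tprod tdiv_def)
qed

lemma one_plus_ln_le_root4:
  assumes "y \<ge> (1::real)"
  shows "1 + ln y \<le> 5 * y powr (1/4)"
proof -
  have "ln (y powr (1/4)) \<le> y powr (1/4) - 1"
    using assms by (intro ln_le_minus_one) simp
  then have "ln y \<le> 4 * y powr (1/4) - 4"
    using assms by (simp add: ln_powr)
  then show ?thesis
    using powr_ge_zero[of y "1/4"] by linarith
qed

lemma harm_le_one_plus_ln:
  assumes "n \<ge> 1"
  shows "harm n \<le> 1 + ln (real n)"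
proof -
  have "harm n - ln (real n) \<le> harm 1 - ln (real 1)"
    using decseq_harm_diff_ln assms unfolding decseq_def by (metis One_nat_def Suc_le_D le0 Suc_le_mono)
  then show ?thesis
    by (simp add: harm_def)
qed

lemma harm_floor_div_estimates:
  fixes x :: real
  assumes x: "x \<ge> 1" and d: "1 \<le> d" "d \<le> nat \<lfloor>x\<rfloor>"
  shows "\<bar>harm (nat \<lfloor>x\<rfloor> div d) - ln x\<bar> \<le> 1 + ln (real d)" and "harm (nat \<lfloor>x\<rfloor> div d) \<le> 1 + ln x"
proof -
  define N where "N = nat \<lfloor>x\<rfloor>"
  define k where "k = N div d"
  have "0 < k"
    using d by (simp add: k_def N_def div_greater_zero_iff)
  then have k: "k \<ge> 1"
    by simp
  have N_le: "real N \<le> x" and N_gt: "x < real N + 1"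
    using x by (simp_all add: N_def)
  have "k * d \<le> N"
    by (simp add: k_def)
  then have "real k * real d \<le> x"
    using N_le by (metis of_nat_le_iff of_nat_mult order_trans)
  then have k_le: "real k \<le> x / real d"
    using d by (simp add: field_simps)
  have "N = d * k + N mod d" "N mod d < d"
    using d by (simp_all add: k_def)
  then have "N < (k + 1) * d"
    by (simp add: algebra_simps)
  then have "real N + 1 \<le> real ((k + 1) * d)"
    by linarith
  then have "x < (real k + 1) * real d"
    using N_gt by (simp add: algebra_simps)
  then have k_gt: "x / real d < real k + 1"
    using d by (simp add: field_simps)
  have ln_div: "ln (x / real d) = ln x - ln (real d)"
    using d x by (simp add: ln_div)
  have lower: "ln x - ln (real d) \<le> harm k"
    using ln_le_harm[of k] k_gt ln_mono[of "x / real d" "real k + 1"] d x ln_div by simp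
  have upper: "harm k \<le> 1 + ln x - ln (real d)"
    using harm_le_one_plus_ln[OF k] ln_mono[of "real k" "x / real d"] k_le k ln_div by simp
  have "ln (real d) \<ge> 0"
    using d by simp
  then show "\<bar>harm (nat \<lfloor>x\<rfloor> div d) - ln x\<bar> \<le> 1 + ln (real d)" "harm (nat \<lfloor>x\<rfloor> div d) \<le> 1 + ln x"
    using lower upper unfolding k_def N_def by linarith+
qed

lemma abs_prod3_sub_cube_le:
  fixes a b c L E :: real
  assumes L: "L \<ge> 0" and a: "0 \<le> a" "a \<le> 1 + L" and b: "0 \<le> b" "b \<le> 1 + L" and c: "0 \<le> c" "c \<le> 1 + L"
    and err: "\<bar>a - L\<bar> \<le> E" "\<bar>b - L\<bar> \<le> E" "\<bar>c - L\<bar> \<le> E"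
  shows "\<bar>a * b * c - L ^ 3\<bar> \<le> 3 * (1 + L) ^ 2 * E"
proof -
  have E: "E \<ge> 0"
    using err(1) by linarith
  have "a * b * c - L ^ 3 = (a - L) * (b * c) + L * ((b - L) * c) + L ^ 2 * (c - L)"
    by (simp add: algebra_simps power2_eq_square power3_eq_cube)
  moreover have "\<bar>(a - L) * (b * c)\<bar> \<le> E * ((1 + L) * (1 + L))"
    unfolding abs_mult using a b c err E by (intro mult_mono) (auto intro: mult_mono)
  moreover have "\<bar>L * ((b - L) * c)\<bar> \<le> (1 + L) * (E * (1 + L))"
    unfolding abs_mult using L b c err E by (intro mult_mono) auto
  moreover have "\<bar>L ^ 2 * (c - L)\<bar> \<le> (1 + L) ^ 2 * E"
    unfolding abs_mult using L c err E by (intro mult_mono power_mono) auto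
  ultimately show ?thesis
    by (simp add: power2_eq_square algebra_simps)
qed

lemma abs_harm_prod_sub_ln_cube_le:
  fixes x :: real
  defines "N \<equiv> nat \<lfloor>x\<rfloor>"
  assumes x: "x \<ge> 1" and d: "d \<in> tbox (N, N, N)"
  shows "\<bar>harm (N div fst d) * harm (N div fst (snd d)) * harm (N div snd (snd d)) - ln x ^ 3\<bar>
    \<le> 15 * (1 + ln x) ^ 2 * real (tprod d) powr (1/4)"
proof -
  have pos: "d \<in> pos_triples"
    using d tbox_subset_pos_triples by blast
  have coords: "1 \<le> fst d" "fst d \<le> N" "1 \<le> fst (snd d)" "fst (snd d) \<le> N" "1 \<le> snd (snd d)" "snd (snd d) \<le> N"
    using d by (auto simp: tbox_def)
  have ln_coord: "1 + ln (real k) \<le> 1 + ln (real (tprod d))" if "1 \<le> k" "k \<le> tprod d" for k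
    using that by simp
  note est1 = harm_floor_div_estimates[OF x coords(1,2)[unfolded N_def]]
    and est2 = harm_floor_div_estimates[OF x coords(3,4)[unfolded N_def]]
    and est3 = harm_floor_div_estimates[OF x coords(5,6)[unfolded N_def]]
  have "\<bar>harm (N div fst d) * harm (N div fst (snd d)) * harm (N div snd (snd d)) - ln x ^ 3\<bar>
      \<le> 3 * (1 + ln x) ^ 2 * (1 + ln (real (tprod d)))"
    unfolding N_def
  proof (rule abs_prod3_sub_cube_le)
    show "\<bar>harm (nat \<lfloor>x\<rfloor> div fst d) - ln x\<bar> \<le> 1 + ln (real (tprod d))"
      using est1(1) ln_coord[OF coords(1) coords_le_tprod(1)[OF pos]] by linarith
    show "\<bar>harm (nat \<lfloor>x\<rfloor> div fst (snd d)) - ln x\<bar> \<le> 1 + ln (real (tprod d))"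
      using est2(1) ln_coord[OF coords(3) coords_le_tprod(2)[OF pos]] by linarith
    show "\<bar>harm (nat \<lfloor>x\<rfloor> div snd (snd d)) - ln x\<bar> \<le> 1 + ln (real (tprod d))"
      using est3(1) ln_coord[OF coords(5) coords_le_tprod(3)[OF pos]] by linarith
  qed (use x est1 est2 est3 in \<open>auto intro: harm_nonneg\<close>)
  also have "\<dots> \<le> 3 * (1 + ln x) ^ 2 * (5 * real (tprod d) powr (1/4))"
    using tprod_pos[OF pos] by (intro mult_left_mono one_plus_ln_le_root4) auto
  finally show ?thesis
    by simp
qed

lemma tprod_ge_outside_tbox:
  fixes x :: real
  assumes x: "x \<ge> 1" and d: "d \<in> pos_triples - tbox (nat \<lfloor>x\<rfloor>, nat \<lfloor>x\<rfloor>, nat \<lfloor>x\<rfloor>)"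
  shows "x \<le> real (tprod d)"
proof -
  have "nat \<lfloor>x\<rfloor> < fst d \<or> nat \<lfloor>x\<rfloor> < fst (snd d) \<or> nat \<lfloor>x\<rfloor> < snd (snd d)"
    using d by (cases d) (auto simp: tbox_def pos_triples_def Suc_le_eq)
  then have "nat \<lfloor>x\<rfloor> < tprod d"
    using coords_le_tprod[of d] d by auto
  then show ?thesis
    using x by linarith
qed

lemma abs_sum_tbox_kernel_harm_le:
  fixes x :: real
  defines "N \<equiv> nat \<lfloor>x\<rfloor>"
  assumes h: "h > 0" and x: "x \<ge> 1"
  shows "\<bar>\<Sum>d\<in>tbox (N, N, N). lcm_kernel h d *
      (harm (N div fst d) * harm (N div fst (snd d)) * harm (N div snd (snd d)) - ln x ^ 3)\<bar>
    \<le> 15 * (1 + ln x) ^ 2 * infsum (weighted_kernel h) pos_triples"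
proof -
  have "\<bar>\<Sum>d\<in>tbox (N, N, N). lcm_kernel h d *
      (harm (N div fst d) * harm (N div fst (snd d)) * harm (N div snd (snd d)) - ln x ^ 3)\<bar>
      \<le> (\<Sum>d\<in>tbox (N, N, N). 15 * (1 + ln x) ^ 2 * weighted_kernel h d)"
  proof (rule order_trans[OF sum_abs sum_mono])
    fix d assume "d \<in> tbox (N, N, N)"
    then have "\<bar>harm (N div fst d) * harm (N div fst (snd d)) * harm (N div snd (snd d)) - ln x ^ 3\<bar>
        \<le> 15 * (1 + ln x) ^ 2 * real (tprod d) powr (1/4)"
      using abs_harm_prod_sub_ln_cube_le[OF x] by (simp add: N_def)
    then show "\<bar>lcm_kernel h d *
        (harm (N div fst d) * harm (N div fst (snd d)) * harm (N div snd (snd d)) - ln x ^ 3)\<bar>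
        \<le> 15 * (1 + ln x) ^ 2 * weighted_kernel h d"
      unfolding abs_mult weighted_kernel_def using mult_left_mono by (fastforce simp: mult_ac)
  qed
  also have "\<dots> \<le> 15 * (1 + ln x) ^ 2 * infsum (weighted_kernel h) pos_triples"
    unfolding sum_distrib_left[symmetric] using weighted_kernel_summable[OF h] tbox_subset_pos_triples
    by (intro mult_left_mono finite_sum_le_infsum) (auto simp: weighted_kernel_nonneg)
  finally show ?thesis .
qed

lemma Ssum_error_bound:
  assumes h: "h > 0" and x: "x \<ge> exp 1"
  shows "\<bar>Ssum h x - infsum (lcm_kernel h) pos_triples * ln x ^ 3\<bar>
    \<le> 65 * infsum (weighted_kernel h) pos_triples * ln x ^ 2"
proof -
  define L where "L = ln x"
  define N where "N = nat \<lfloor>x\<rfloor>"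
  define B where "B = infsum (weighted_kernel h) pos_triples"
  define H :: "triple \<Rightarrow> real" where "H d = harm (N div fst d) * harm (N div fst (snd d)) * harm (N div snd (snd d))" for d
  have x1: "x \<ge> 1"
    using x one_le_exp_iff[of 1] by linarith
  have L1: "L \<ge> 1"
    using ln_ge_iff[of x 1] x x1 by (simp add: L_def)
  have B: "B \<ge> 0"
    unfolding B_def by (intro infsum_nonneg weighted_kernel_nonneg)
  have box: "tbox (N, N, N) \<subseteq> pos_triples"
    by (rule tbox_subset_pos_triples)
  have inside: "\<bar>\<Sum>d\<in>tbox (N, N, N). lcm_kernel h d * (H d - L ^ 3)\<bar> \<le> 15 * (1 + L) ^ 2 * B"
    using abs_sum_tbox_kernel_harm_le[OF h x1] by (simp add: H_def L_def N_def B_def)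
  have outside: "\<bar>infsum (lcm_kernel h) pos_triples - sum (lcm_kernel h) (tbox (N, N, N))\<bar> \<le> B * x powr (-1/4)"
    using abs_infsum_lcm_kernel_diff_le[OF h box, of "x powr (-1/4)"]
      abs_lcm_kernel_le_weighted tprod_ge_outside_tbox[OF x1] x1
    by (simp add: B_def N_def)
  have "L * x powr (-1/4) \<le> 5"
    using one_plus_ln_le_root4[OF x1] x1 by (simp add: L_def powr_minus field_simps)
  then have "L ^ 3 * (B * x powr (-1/4)) \<le> 5 * B * L ^ 2"
    using B L1 mult_left_mono[of "L * x powr (-1/4)" 5 "B * L ^ 2"]
    by (simp add: power2_eq_square power3_eq_cube mult_ac)
  moreover have "15 * (1 + L) ^ 2 * B \<le> 60 * B * L ^ 2"
    using L1 B mult_right_mono[of "(1 + L) ^ 2" "4 * L ^ 2" B] power_mono[of "1 + L" "2 * L" 2]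
    by (simp add: power_mult_distrib mult_ac)
  moreover have "Ssum h x - infsum (lcm_kernel h) pos_triples * L ^ 3
      = (\<Sum>d\<in>tbox (N, N, N). lcm_kernel h d * (H d - L ^ 3))
        - L ^ 3 * (infsum (lcm_kernel h) pos_triples - sum (lcm_kernel h) (tbox (N, N, N)))"
    by (simp add: Ssum_eq_sum_lcm_kernel H_def N_def algebra_simps sum_subtractf sum_distrib_right
        sum_distrib_left)
  moreover have "\<bar>L ^ 3 * (infsum (lcm_kernel h) pos_triples - sum (lcm_kernel h) (tbox (N, N, N)))\<bar>
      \<le> L ^ 3 * (B * x powr (-1/4))"
    using outside L1 by (simp add: abs_mult mult_left_mono)
  ultimately show ?thesis
    using inside unfolding L_def[symmetric] B_def[symmetric] by linarith
qed

theorem proposition3p1: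
  fixes h :: nat
  assumes "h > 0"
  shows "Delta h \<noteq> 0 \<and>
         (\<lambda>x::real. Ssum h x - Delta h * euler_prod * (ln x) ^ 3) \<in> O[at_top](\<lambda>x. (ln x) ^ 2)"
proof
  show "Delta h \<noteq> 0"
    by (rule Delta_nonzero[OF assms])
  have "\<forall>\<^sub>F x in at_top. norm (Ssum h x - Delta h * euler_prod * (ln x) ^ 3)
      \<le> 65 * infsum (weighted_kernel h) pos_triples * norm ((ln x) ^ 2)"
    using eventually_ge_at_top[of "exp 1 :: real"]
    by eventually_elim (use Ssum_error_bound[OF assms] infsum_lcm_kernel[OF assms] in simp)
  then show "(\<lambda>x::real. Ssum h x - Delta h * euler_prod * (ln x) ^ 3) \<in> O[at_top](\<lambda>x. (ln x) ^ 2)"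
    by (rule bigoI)
qed

end
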